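(* Let $d\ge3$, $R\in\mathbb N$, $p\in(0,1)$, $\mathsf v>0$, and let $\mu$ be a stationary probability measure for the voter model with range $R$ on dynamical percolation with parameters $\mathsf v,p$. Let $k\in\mathbb N$, $C=\{x_1,\dots,x_k\}\subseteq\mathbb Z^d$ with distinct $x_i$, and $E,F$ finite disjoint sets of edges. Let $(X^1_t,\dots,X^k_t,\mathbb A_t,\mathbb B_t)$ be the independent-walkers-with-knowledge chain started from $(x_1,\dots,x_k,E,F)$, with law $\mathbf P_{C,E,F}$, and $\mathcal X_t=\{X^1_t,\dots,X^k_t\}$. Then $\mathbf E_{C,E,F}[\bar\mu(\mathcal X_t,\mathbb A_t,\mathbb B_t)]$ converges as $t\to\infty$.
   Context: For a measure $\mu$ on $\{0,1\}^{\mathbb Z^d}\times\{0,1\}^{E(\mathbb Z^d)}$, $\bar\mu(C,E,F):=p^{-|E|}(1-p)^{-|F|}\mu(\eta\equiv1\text{ on }C,\ \zeta\equiv1\text{ on }E,\ \zeta\equiv0\text{ on }F)$. $B_1(x,R)=\{y:|y-x|_1\le R\}$, $|B_1(R)|$ its cardinality, $E_1(x,R)$ the nearest-neighbour edges with both endpoints in $B_1(x,R)$. Dynamical percolation: each edge independently flips 0→1 at rate $p\mathsf v$ and 1→0 at rate $(1-p)\mathsf v$. The voter model with range $R$ on dynamical percolation is the process $(\eta_t,\zeta_t)$ where $\zeta_t$ is dynamical percolation and, for each ordered pair $(x,y)$ with $1\le|x-y|_1\le R$, at rate $1/(|B_1(R)|-1)$ site $x$ adopts $\eta_t(y)$ provided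 $x,y$ are joined by a path of $\zeta_t$-open edges with vertices in $B_1(x,R)$. The independent-walkers-with-knowledge chain on states $(\mathbf x,E,F)$, $\mathbf x=(x_1,\dots,x_k)\in(\mathbb Z^d)^k$, $E,F$ disjoint finite edge sets, has rates: (i) $(\mathbf x,E,F)\to(\mathbf x,E\setminus\{e\},F\setminus\{e\})$ at rate $\mathsf v$ for each $e\in E\cup F$; (ii) for each $i$, $y\in B_1(x_i,R)\setminus\{x_i\}$ and each partition $(E',F')$ of $E_1(x_i,R)\setminus(E\cup F)$, at rate $p^{|E'|}(1-p)^{|F'|}/(|B_1(R)|-1)$ the chain jumps to $(\mathbf x^{i,y},E\cup E',F\cup F')$ (the $i$-th coordinate replaced by $y$) if $x_i,y$ are joined by a path of edges of $E\cup E'$ with vertices in $B_1(x_i,R)$, and to $(\mathbf x,E\cup E',F\cup F')$ otherwise. (This is the law of $k$ independent range-$R$ random walks on one dynamical percolation environment started from stationarity conditioned on edges of $E$ open and of $F$ closed, together with the sets of known-open/known-closed edges.) *)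

theory Defs
  imports "HOL-Analysis.Analysis" "HOL-Probability.Probability"
begin

definition l1norm :: "int ^ 'd \<Rightarrow> int" where
  "l1norm x = (\<Sum>i\<in>UNIV. \<bar>x $ i\<bar>)"

definition adj :: "int ^ 'd \<Rightarrow> int ^ 'd \<Rightarrow> bool" where
  "adj x y \<longleftrightarrow> l1norm (x - y) = 1"

definition edges :: "(int ^ 'd) set set" where
  "edges = {{x, y} | x y. adj x y}"

definition ball1 :: "int ^ 'd \<Rightarrow> nat \<Rightarrow> (int ^ 'd) set" where
  "ball1 x R = {y. l1norm (y - x) \<le> int R}"

definition edges_ball :: "int ^ 'd \<Rightarrow> nat \<Rightarrow> (int ^ 'd) set set" where
  "edges_ball x R = {{u, w} | u w. adj u w \<and> u \<in> ball1 x R \<and> w \<in> ball1 x R}"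

definition jrate :: "'d::finite itself \<Rightarrow> nat \<Rightarrow> real" where
  "jrate _ R = 1 / (real (card (ball1 (0 :: int ^ 'd) R)) - 1)"

definition conn :: "((int ^ 'd) set \<Rightarrow> bool) \<Rightarrow> (int ^ 'd) set \<Rightarrow> int ^ 'd \<Rightarrow> int ^ 'd \<Rightarrow> bool" where
  "conn op B u w = (\<lambda>a b. a \<in> B \<and> b \<in> B \<and> adj a b \<and> op {a, b})\<^sup>*\<^sup>* u w"

text \<open>A configuration (eta, zeta) in {0,1}^{Z^d} x {0,1}^{E(Z^d)} (True = 1).\<close>
definition cfg_space :: "((int ^ 'd \<Rightarrow> bool) \<times> ((int ^ 'd) set \<Rightarrow> bool)) measure" where
  "cfg_space = (PiM UNIV (\<lambda>_. count_space UNIV)) \<Otimes>\<^sub>M (PiM edges (\<lambda>_. count_space UNIV))"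

definition mubar :: "real \<Rightarrow> ((int ^ 'd \<Rightarrow> bool) \<times> ((int ^ 'd) set \<Rightarrow> bool)) measure
    \<Rightarrow> (int ^ 'd) set \<Rightarrow> (int ^ 'd) set set \<Rightarrow> (int ^ 'd) set set \<Rightarrow> real" where
  "mubar p \<mu> C E F = inverse (p ^ card E * (1 - p) ^ card F) *
     measure \<mu> {c \<in> space \<mu>. (\<forall>x\<in>C. fst c x) \<and> (\<forall>e\<in>E. snd c e) \<and> (\<forall>e\<in>F. \<not> snd c e)}"

definition cylinder :: "(int ^ 'd) set \<Rightarrow> (int ^ 'd) set set
    \<Rightarrow> ((int ^ 'd \<Rightarrow> bool) \<times> ((int ^ 'd) set \<Rightarrow> bool) \<Rightarrow> real) \<Rightarrow> bool" where
  "cylinder S T f \<longleftrightarrow> (\<forall>c c'. (\<forall>x\<in>S. fst c x = fst c' x) \<longrightarrow> (\<forall>e\<in>T. snd c e = snd c' e)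
      \<longrightarrow> f c = f c')"

text \<open>Generator of the voter model with range R on dynamical percolation, applied to a
  function depending only on the coordinates in S and T (all other terms of the generator
  vanish for such f).\<close>
definition voter_gen :: "nat \<Rightarrow> real \<Rightarrow> real \<Rightarrow> ('d::finite) itself \<Rightarrow> (int ^ 'd) set \<Rightarrow> (int ^ 'd) set set
    \<Rightarrow> ((int ^ 'd \<Rightarrow> bool) \<times> ((int ^ 'd) set \<Rightarrow> bool) \<Rightarrow> real)
    \<Rightarrow> (int ^ 'd \<Rightarrow> bool) \<times> ((int ^ 'd) set \<Rightarrow> bool) \<Rightarrow> real" where
  "voter_gen R v p D S T f c = (case c of (\<eta>, \<zeta>) \<Rightarrow>
     (\<Sum>x\<in>S. \<Sum>y\<in>{y. 1 \<le> l1norm (x - y) \<and> l1norm (x - y) \<le> int R}.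
         jrate D R * (if conn \<zeta> (ball1 x R) x y then f (\<eta>(x := \<eta> y), \<zeta>) - f (\<eta>, \<zeta>) else 0))
   + (\<Sum>e\<in>T. p * v * (f (\<eta>, \<zeta>(e := True)) - f (\<eta>, \<zeta>))
            + (1 - p) * v * (f (\<eta>, \<zeta>(e := False)) - f (\<eta>, \<zeta>))))"

definition voter_stationary :: "nat \<Rightarrow> real \<Rightarrow> real
    \<Rightarrow> ((int ^ 'd::finite \<Rightarrow> bool) \<times> ((int ^ 'd) set \<Rightarrow> bool)) measure \<Rightarrow> bool" where
  "voter_stationary R v p \<mu> \<longleftrightarrow> prob_space \<mu> \<and> sets \<mu> = sets cfg_space \<and>
     (\<forall>S T f. finite S \<longrightarrow> finite T \<longrightarrow> T \<subseteq> edges \<longrightarrow> cylinder S T f \<longrightarrow>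
        (\<integral>c. voter_gen R v p TYPE('d) S T f c \<partial>\<mu>) = 0)"

type_synonym 'd wstate = "(int ^ 'd) list \<times> (int ^ 'd) set set \<times> (int ^ 'd) set set"

text \<open>Jump rate from state s to a different state s' (self-loops are irrelevant).\<close>
definition wk_rate :: "nat \<Rightarrow> real \<Rightarrow> real \<Rightarrow> ('d::finite) wstate \<Rightarrow> 'd wstate \<Rightarrow> real" where
  "wk_rate R v p s s' = (if s' = s then 0 else (case s of (xs, E, F) \<Rightarrow>
      v * real (card {e \<in> E \<union> F. s' = (xs, E - {e}, F - {e})})
    + (\<Sum>i<length xs. \<Sum>y\<in>ball1 (xs ! i) R - {xs ! i}.
         \<Sum>E'\<in>Pow (edges_ball (xs ! i) R - (E \<union> F)).
           (let F' = edges_ball (xs ! i) R - (E \<union> F) - E' in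
            if s' = ((if conn (\<lambda>e. e \<in> E \<union> E') (ball1 (xs ! i) R) (xs ! i) y
                      then xs[i := y] else xs), E \<union> E', F \<union> F')
            then p ^ card E' * (1 - p) ^ card F' * jrate TYPE('d) R else 0))))"

definition wk_supp :: "nat \<Rightarrow> real \<Rightarrow> real \<Rightarrow> ('d::finite) wstate \<Rightarrow> 'd wstate set" where
  "wk_supp R v p s = {s'. wk_rate R v p s s' \<noteq> 0}"

definition wk_out :: "nat \<Rightarrow> real \<Rightarrow> real \<Rightarrow> ('d::finite) wstate \<Rightarrow> real" where
  "wk_out R v p s = (\<Sum>s'\<in>wk_supp R v p s. wk_rate R v p s s')"

text \<open>Probability to be at s' at time t having made exactly n jumps (minimal chain).\<close>
fun wk_trans_n :: "nat \<Rightarrow> real \<Rightarrow> real \<Rightarrow> nat \<Rightarrow> real \<Rightarrow> ('d::finite) wstate \<Rightarrow> 'd wstate \<Rightarrow> real" where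
  "wk_trans_n R v p 0 t s s' = (if s = s' then exp (- wk_out R v p s * t) else 0)"
| "wk_trans_n R v p (Suc n) t s s' =
     (LINT u:{0..t}|lborel. exp (- wk_out R v p s * u) *
        (\<Sum>s''\<in>wk_supp R v p s. wk_rate R v p s s'' * wk_trans_n R v p n (t - u) s'' s'))"

definition wk_trans :: "nat \<Rightarrow> real \<Rightarrow> real \<Rightarrow> real \<Rightarrow> ('d::finite) wstate \<Rightarrow> 'd wstate \<Rightarrow> real" where
  "wk_trans R v p t s s' = (\<Sum>n. wk_trans_n R v p n t s s')"

definition wk_expect :: "nat \<Rightarrow> real \<Rightarrow> real \<Rightarrow> ((int ^ 'd::finite \<Rightarrow> bool) \<times> ((int ^ 'd) set \<Rightarrow> bool)) measure
    \<Rightarrow> real \<Rightarrow> 'd wstate \<Rightarrow> real" where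
  "wk_expect R v p \<mu> t s0 = infsum (\<lambda>s'. wk_trans R v p t s0 s' *
      mubar p \<mu> (set (fst s')) (fst (snd s')) (snd (snd s'))) UNIV"

end

(*
  The function m(xs, E, F) = mubar(set xs, E, F) is superharmonic for the walkers-with-knowledge
  chain.  Stationarity of mu, applied to the indicator of the cylinder event
  {eta = 1 on C, zeta = 1 on E, zeta = 0 on F}, says that the voter generator integrates to zero;
  written out, this integral is N(E, F) times the chain generator applied to m at a state whose
  walkers occupy distinct sites, where N(E, F) = p^|E| (1 - p)^|F|.  When several walkers share a
  site, moving one of them leaves the occupied set larger, which can only decrease mubar, so the
  generator of m is nonpositive at every state.

  For a jump chain whose transition function is built from the jump-count expansion, a
  nonnegative superharmonic function m makes E_s[m(X_t)] nonincreasing in t: by the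
  Chapman-Kolmogorov equation the mass reaching s' at time t + h passes through some state at
  time t, and from there the partial sums of the expansion are bounded by m.  Being nonincreasing
  and nonnegative, E_s[m(X_t)] converges.
*)

theory Submission
  imports Defs
begin

lemma abs_component_le_l1norm: "\<bar>x $ i\<bar> \<le> l1norm (x :: int ^ 'd::finite)"
  unfolding l1norm_def by (rule member_le_sum) auto

lemma l1norm_nonneg: "0 \<le> l1norm (x :: int ^ 'd::finite)"
  unfolding l1norm_def by (rule sum_nonneg) auto

lemma l1norm_eq_0_iff: "l1norm (x :: int ^ 'd::finite) = 0 \<longleftrightarrow> x = 0"
proof -
  have "l1norm x = 0 \<longleftrightarrow> (\<forall>i. \<bar>x $ i\<bar> = 0)"
    unfolding l1norm_def by (subst sum_nonneg_eq_0_iff) auto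
  thus ?thesis by (simp add: vec_eq_iff)
qed

lemma l1norm_minus_commute: "l1norm (x - y) = l1norm (y - x :: int ^ 'd::finite)"
  unfolding l1norm_def by (simp add: abs_minus_commute)

lemma center_in_ball1: "x \<in> ball1 x R"
  by (simp add: ball1_def l1norm_def)

lemma ball1_minus_center:
  "{y. 1 \<le> l1norm (x - y) \<and> l1norm (x - y) \<le> int R} = ball1 x R - {x :: int ^ 'd::finite}"
proof -
  have "1 \<le> l1norm (x - y) \<longleftrightarrow> x \<noteq> y" for y
    using l1norm_eq_0_iff[of "x - y"] l1norm_nonneg[of "x - y"] by auto
  thus ?thesis unfolding ball1_def by (auto simp: l1norm_minus_commute[of _ x])
qed

lemma finite_ball1: "finite (ball1 (x :: int ^ 'd::finite) R)"
proof -
  let ?box = "Pi\<^sub>E UNIV (\<lambda>i. {x $ i - int R .. x $ i + int R})"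
  have "ball1 x R \<subseteq> vec_lambda ` ?box"
  proof
    fix y assume "y \<in> ball1 x R"
    hence "x $ i - int R \<le> y $ i \<and> y $ i \<le> x $ i + int R" for i
      using abs_component_le_l1norm[of "y - x" i] unfolding ball1_def by (auto simp: abs_le_iff)
    hence "(\<lambda>i. y $ i) \<in> ?box"
      by auto
    thus "y \<in> vec_lambda ` ?box"
      by (intro image_eqI[where x = "\<lambda>i. y $ i"]) auto
  qed
  thus ?thesis by (rule finite_subset) (intro finite_imageI finite_PiE; simp)
qed

lemma finite_edges_ball: "finite (edges_ball (x :: int ^ 'd::finite) R)"
proof -
  have "edges_ball x R \<subseteq> (\<lambda>(u, w). {u, w}) ` (ball1 x R \<times> ball1 x R)"
    unfolding edges_ball_def by auto
  thus ?thesis by (rule finite_subset) (simp add: finite_ball1)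
qed

lemma edges_ball_subset_edges: "edges_ball x R \<subseteq> edges"
  unfolding edges_ball_def edges_def by auto

lemma jrate_nonneg: "0 \<le> jrate TYPE('d::finite) R"
proof -
  have "ball1 (0 :: int ^ 'd) R \<noteq> {}" using center_in_ball1 by blast
  hence "1 \<le> card (ball1 (0 :: int ^ 'd) R)"
    using finite_ball1 by (simp add: Suc_le_eq card_gt_0_iff)
  thus ?thesis unfolding jrate_def by simp
qed

lemma conn_cong:
  assumes "\<And>e. e \<in> edges_ball x R \<Longrightarrow> op e = op' e"
  shows "conn op (ball1 x R) u w = conn op' (ball1 x R) u w"
proof -
  have "(\<lambda>a b. a \<in> ball1 x R \<and> b \<in> ball1 x R \<and> adj a b \<and> op {a, b}) =
        (\<lambda>a b. a \<in> ball1 x R \<and> b \<in> ball1 x R \<and> adj a b \<and> op' {a, b})"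
    using assms unfolding edges_ball_def by blast
  thus ?thesis unfolding conn_def by simp
qed

section \<open>Exponential convolutions\<close>

lemma integral_reflect_interval:
  fixes f :: "real \<Rightarrow> real"
  shows "integral {0..t} (\<lambda>u. f (t - u)) = integral {0..t} f"
proof -
  have "integral {0..t} (\<lambda>u. f (t - u)) = integral {0..t} ((\<lambda>x. f (- x)) \<circ> (+) (- t))"
    by (simp add: o_def)
  also have "\<dots> = integral {- t..0} (\<lambda>x. f (- x))"
    by (subst integral_shift_Icc_real) simp
  also have "\<dots> = integral {0..t} f"
    using Henstock_Kurzweil_Integration.integral_reflect_real[of t 0 f] by simp
  finally show ?thesis .
qed

lemma continuous_on_exp_convolution:
  fixes G :: "real \<Rightarrow> real"
  assumes "continuous_on {0..t} G"
  shows "continuous_on {0..t} (\<lambda>u. exp (- q * u) * G (t - u))"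
proof -
  have "continuous_on {0..t} (G \<circ> (\<lambda>u. t - u))"
    by (rule continuous_on_compose)
       (auto intro!: continuous_intros continuous_on_subset[OF assms])
  thus ?thesis by (auto intro!: continuous_intros simp: o_def)
qed

lemma set_integral_exp_convolution:
  fixes G :: "real \<Rightarrow> real"
  assumes "continuous_on {0..t} G"
  shows "(LINT u:{0..t}|lborel. exp (- q * u) * G (t - u)) =
    integral {0..t} (\<lambda>u. exp (- q * u) * G (t - u))"
  by (intro set_borel_integral_eq_integral(2) borel_integrable_atLeastAtMost'
      continuous_on_exp_convolution assms)

lemma integral_exp_convolution:
  fixes G :: "real \<Rightarrow> real"
  shows "integral {0..t} (\<lambda>u. exp (- q * u) * G (t - u)) =
    exp (- q * t) * integral {0..t} (\<lambda>w. exp (q * w) * G w)"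
proof -
  have "integral {0..t} (\<lambda>u. exp (- q * u) * G (t - u)) =
      integral {0..t} (\<lambda>w. exp (- q * (t - w)) * G w)"
    using integral_reflect_interval[where f = "\<lambda>w. exp (- q * (t - w)) * G w" and t = t] by simp
  also have "\<dots> = integral {0..t} (\<lambda>w. exp (- q * t) * (exp (q * w) * G w))"
    by (rule integral_cong) (simp add: algebra_simps flip: exp_add)
  finally show ?thesis by simp
qed

lemma continuous_on_set_integral_exp_convolution:
  fixes G :: "real \<Rightarrow> real"
  assumes "\<And>T. continuous_on {0..T} G"
  shows "continuous_on {0..T} (\<lambda>t. LINT u:{0..t}|lborel. exp (- q * u) * G (t - u))"
proof -
  have "continuous_on {0..T} (\<lambda>t. exp (- q * t) * integral {0..t} (\<lambda>w. exp (q * w) * G w))"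
    by (intro continuous_intros indefinite_integral_continuous_1
        integrable_continuous_interval assms)
  moreover have "(LINT u:{0..t}|lborel. exp (- q * u) * G (t - u)) =
      exp (- q * t) * integral {0..t} (\<lambda>w. exp (q * w) * G w)" for t
    using set_integral_exp_convolution[OF assms, of t q]
      integral_exp_convolution[where q = q and t = t and G = G] by simp
  ultimately show ?thesis by simp
qed

lemma integral_exp_density:
  fixes q t :: real
  assumes "0 \<le> t"
  shows "integral {0..t} (\<lambda>u. q * exp (- q * u)) = 1 - exp (- q * t)"
proof -
  have "((\<lambda>u. q * exp (- q * u)) has_integral (- exp (- q * t) - - exp (- q * 0))) {0..t}"
    by (intro fundamental_theorem_of_calculus assms)
       (auto simp flip: has_real_derivative_iff_has_vector_derivative intro!: derivative_eq_intros)
  from integral_unique[OF this] show ?thesis by simp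
qed

lemma antimono_bounded_tendsto:
  fixes f :: "real \<Rightarrow> real"
  assumes antimono: "\<And>t t'. a \<le> t \<Longrightarrow> t \<le> t' \<Longrightarrow> f t' \<le> f t"
    and bounded: "\<And>t. a \<le> t \<Longrightarrow> b \<le> f t"
  shows "((\<lambda>t. f t) \<longlongrightarrow> Inf (f ` {a..})) at_top"
proof (rule decreasing_tendsto)
  have bdd: "bdd_below (f ` {a..})"
    using bounded by (intro bdd_belowI[where m = b]) auto
  show "\<forall>\<^sub>F t in at_top. Inf (f ` {a..}) \<le> f t"
    using bdd by (intro eventually_at_top_linorderI[where c = a] cInf_lower) auto
next
  fix x assume "Inf (f ` {a..}) < x"
  then obtain t0 where "a \<le> t0" "f t0 < x"
    using cInf_lessD[of "f ` {a..}" x] by auto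
  thus "\<forall>\<^sub>F t in at_top. f t < x"
    using antimono
    by (intro eventually_at_top_linorderI[where c = t0]) (meson le_less_trans order_trans)
qed

section \<open>Jump chains\<close>

(* The constructions wk_supp, wk_out, wk_trans_n, wk_trans and wk_expect of Defs, for an
   arbitrary rate function r. *)

definition jump_supp :: "('s \<Rightarrow> 's \<Rightarrow> real) \<Rightarrow> 's \<Rightarrow> 's set" where
  "jump_supp r s = {s'. r s s' \<noteq> 0}"

definition jump_out :: "('s \<Rightarrow> 's \<Rightarrow> real) \<Rightarrow> 's \<Rightarrow> real" where
  "jump_out r s = (\<Sum>s'\<in>jump_supp r s. r s s')"

fun jump_trans_n :: "('s \<Rightarrow> 's \<Rightarrow> real) \<Rightarrow> nat \<Rightarrow> real \<Rightarrow> 's \<Rightarrow> 's \<Rightarrow> real" where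
  "jump_trans_n r 0 t s s' = (if s = s' then exp (- jump_out r s * t) else 0)"
| "jump_trans_n r (Suc n) t s s' =
     (LINT u:{0..t}|lborel. exp (- jump_out r s * u) *
        (\<Sum>s''\<in>jump_supp r s. r s s'' * jump_trans_n r n (t - u) s'' s'))"

declare jump_trans_n.simps(2) [simp del]

definition jump_trans :: "('s \<Rightarrow> 's \<Rightarrow> real) \<Rightarrow> real \<Rightarrow> 's \<Rightarrow> 's \<Rightarrow> real" where
  "jump_trans r t s s' = (\<Sum>n. jump_trans_n r n t s s')"

definition jump_expect :: "('s \<Rightarrow> 's \<Rightarrow> real) \<Rightarrow> ('s \<Rightarrow> real) \<Rightarrow> real \<Rightarrow> 's \<Rightarrow> real" where
  "jump_expect r m t s = infsum (\<lambda>s'. jump_trans r t s s' * m s') UNIV"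

definition jump_superharmonic :: "('s \<Rightarrow> 's \<Rightarrow> real) \<Rightarrow> 's set \<Rightarrow> ('s \<Rightarrow> real) \<Rightarrow> bool" where
  "jump_superharmonic r S m \<longleftrightarrow> (\<forall>s\<in>S. (\<Sum>s'\<in>jump_supp r s. r s s' * (m s' - m s)) \<le> 0)"

fun jump_reach :: "('s \<Rightarrow> 's \<Rightarrow> real) \<Rightarrow> nat \<Rightarrow> 's \<Rightarrow> 's set" where
  "jump_reach r 0 s = {s}"
| "jump_reach r (Suc n) s = insert s (\<Union>s'\<in>jump_supp r s. jump_reach r n s')"

lemma jump_superharmonicD:
  assumes "jump_superharmonic r S m" "s \<in> S"
  shows "(\<Sum>s'\<in>jump_supp r s. r s s' * m s') \<le> jump_out r s * m s"
  using assms unfolding jump_superharmonic_def jump_out_def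
  by (simp add: right_diff_distrib sum_subtractf sum_distrib_right)

lemma jump_superharmonic_const: "jump_superharmonic r S (\<lambda>_. c)"
  by (simp add: jump_superharmonic_def)

lemma jump_reach_self: "s \<in> jump_reach r n s"
  by (cases n) auto

lemma jump_reach_mono:
  assumes "j \<le> n"
  shows "jump_reach r j s \<subseteq> jump_reach r n s"
proof -
  have step: "jump_reach r n s \<subseteq> jump_reach r (Suc n) s" for n s
  proof (induction n arbitrary: s)
    case (Suc n)
    have unfold_Suc: "jump_reach r (Suc k) s = insert s (\<Union>s'\<in>jump_supp r s. jump_reach r k s')"
      for k by (rule jump_reach.simps(2))
    show ?case unfolding unfold_Suc[of n] unfold_Suc[of "Suc n"]
      by (rule Set.insert_mono, rule UN_mono[OF subset_refl Suc.IH])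
  qed simp
  from assms show ?thesis
    by (induction n rule: dec_induct) (use step in blast)+
qed

lemma jump_trans_n_continuous_on: "continuous_on {0..T} (\<lambda>t. jump_trans_n r n t s s')"
proof (induction n arbitrary: s s' T)
  case 0
  show ?case by (cases "s = s'") (auto intro!: continuous_intros)
next
  case (Suc n)
  show ?case unfolding jump_trans_n.simps
    by (intro continuous_on_set_integral_exp_convolution continuous_intros Suc.IH)
qed

lemma jump_trans_n_Suc_integral:
  "jump_trans_n r (Suc n) t s s' = integral {0..t} (\<lambda>u. exp (- jump_out r s * u) *
     (\<Sum>s''\<in>jump_supp r s. r s s'' * jump_trans_n r n (t - u) s'' s'))"
  unfolding jump_trans_n.simps
  by (intro set_integral_exp_convolution continuous_intros jump_trans_n_continuous_on)

lemma jump_trans_n_eq_0: "s' \<notin> jump_reach r n s \<Longrightarrow> jump_trans_n r n t s s' = 0"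
  by (induction n arbitrary: s t) (auto simp: jump_trans_n_Suc_integral)

(* Decomposition according to the time of the first jump. *)
lemma sum_jump_trans_n_Suc:
  assumes "finite J" "finite B"
  shows "(\<Sum>j\<in>J. \<Sum>s'\<in>B. jump_trans_n r (Suc j) t s s' * c j s') =
    integral {0..t} (\<lambda>u. exp (- jump_out r s * u) * (\<Sum>\<sigma>\<in>jump_supp r s. r s \<sigma> *
      (\<Sum>j\<in>J. \<Sum>s'\<in>B. jump_trans_n r j (t - u) \<sigma> s' * c j s')))"
proof -
  let ?q = "jump_out r s" and ?S = "jump_supp r s"
  define g where "g j s' u = exp (- ?q * u) * (\<Sum>\<sigma>\<in>?S. r s \<sigma> * jump_trans_n r j (t - u) \<sigma> s')"
    for j s' u
  have g_int: "(\<lambda>u. g j s' u * c j s') integrable_on {0..t}" for j s'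
    unfolding g_def
    by (intro integrable_on_mult_left integrable_continuous_interval continuous_on_exp_convolution
        continuous_intros jump_trans_n_continuous_on)
  have "(\<Sum>j\<in>J. \<Sum>s'\<in>B. jump_trans_n r (Suc j) t s s' * c j s') =
      (\<Sum>j\<in>J. \<Sum>s'\<in>B. integral {0..t} (\<lambda>u. g j s' u * c j s'))"
    by (simp add: jump_trans_n_Suc_integral g_def)
  also have "\<dots> = integral {0..t} (\<lambda>u. \<Sum>j\<in>J. \<Sum>s'\<in>B. g j s' u * c j s')"
    using assms g_int by (simp add: integral_sum integrable_sum)
  also have "\<dots> = integral {0..t} (\<lambda>u. exp (- ?q * u) *
      (\<Sum>\<sigma>\<in>?S. r s \<sigma> * (\<Sum>j\<in>J. \<Sum>s'\<in>B. jump_trans_n r j (t - u) \<sigma> s' * c j s')))"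
  proof (rule integral_cong)
    fix u
    have "(\<Sum>j\<in>J. \<Sum>s'\<in>B. g j s' u * c j s') = exp (- ?q * u) *
        (\<Sum>j\<in>J. \<Sum>s'\<in>B. \<Sum>\<sigma>\<in>?S. r s \<sigma> * (jump_trans_n r j (t - u) \<sigma> s' * c j s'))"
      by (simp add: g_def sum_distrib_left sum_distrib_right mult.assoc)
    also have "\<dots> = exp (- ?q * u) *
        (\<Sum>\<sigma>\<in>?S. \<Sum>j\<in>J. \<Sum>s'\<in>B. r s \<sigma> * (jump_trans_n r j (t - u) \<sigma> s' * c j s'))"
      by (simp only: sum.swap[of _ B ?S] sum.swap[of _ J ?S])
    finally show "(\<Sum>j\<in>J. \<Sum>s'\<in>B. g j s' u * c j s') = exp (- ?q * u) *
        (\<Sum>\<sigma>\<in>?S. r s \<sigma> * (\<Sum>j\<in>J. \<Sum>s'\<in>B. jump_trans_n r j (t - u) \<sigma> s' * c j s'))"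
      by (simp add: sum_distrib_left)
  qed
  finally show ?thesis .
qed

(* Split according to whether the first jump occurs before or after time t. *)
lemma jump_trans_n_Suc_add:
  assumes "0 \<le> t" "0 \<le> h"
  shows "jump_trans_n r (Suc n) (t + h) s s' =
    integral {0..t} (\<lambda>u. exp (- jump_out r s * u) *
      (\<Sum>\<sigma>\<in>jump_supp r s. r s \<sigma> * jump_trans_n r n (t + h - u) \<sigma> s'))
    + exp (- jump_out r s * t) * jump_trans_n r (Suc n) h s s'"
proof -
  let ?q = "jump_out r s"
  define f where "f = (\<lambda>u. exp (- ?q * u) *
    (\<Sum>\<sigma>\<in>jump_supp r s. r s \<sigma> * jump_trans_n r n (t + h - u) \<sigma> s'))"
  have "f integrable_on {0..t + h}"
    unfolding f_def by (intro integrable_continuous_interval continuous_on_exp_convolution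
        continuous_intros jump_trans_n_continuous_on)
  hence "integral {0..t + h} f = integral {0..t} f + integral {t..t + h} f"
    using assms by (intro Henstock_Kurzweil_Integration.integral_combine[symmetric]) auto
  hence split: "jump_trans_n r (Suc n) (t + h) s s' = integral {0..t} f + integral {t..t + h} f"
    unfolding f_def by (simp only: jump_trans_n_Suc_integral)
  have "integral {t..t + h} f = integral {0..h} (f \<circ> (+) t)"
    using integral_shift_Icc_real[of 0 h f t] by (simp add: add.commute)
  also have "\<dots> = integral {0..h} (\<lambda>w. exp (- ?q * t) * (exp (- ?q * w) *
      (\<Sum>\<sigma>\<in>jump_supp r s. r s \<sigma> * jump_trans_n r n (h - w) \<sigma> s')))"
    by (rule integral_cong) (simp add: f_def distrib_left flip: mult.assoc exp_add)
  also have "\<dots> = exp (- ?q * t) * jump_trans_n r (Suc n) h s s'"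
    by (simp add: jump_trans_n_Suc_integral)
  finally have shift: "integral {t..t + h} f = exp (- ?q * t) * jump_trans_n r (Suc n) h s s'" .
  show ?thesis unfolding split shift unfolding f_def ..
qed

(* Split the n jumps into those made before and after time t. *)
lemma chapman_kolmogorov:
  assumes "0 \<le> t" "0 \<le> h" "finite B" "jump_reach r n s \<subseteq> B"
  shows "jump_trans_n r n (t + h) s s' =
    (\<Sum>j\<le>n. \<Sum>s''\<in>B. jump_trans_n r j t s s'' * jump_trans_n r (n - j) h s'' s')"
  using assms(1,4)
proof (induction n arbitrary: s t)
  case 0
  hence "s \<in> B" by simp
  with assms(3) show ?case by (simp add: mult_delta_left distrib_left mult_exp_exp)
next
  case (Suc n)
  let ?P = "jump_trans_n r" and ?q = "jump_out r s"
  have "s \<in> B" using Suc.prems(2) jump_reach_self[of s r "Suc n"] by blast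
  hence no_jump: "(\<Sum>s''\<in>B. ?P 0 t s s'' * ?P (Suc n) h s'' s') = exp (- ?q * t) * ?P (Suc n) h s s'"
    using assms(3) by (simp add: mult_delta_left)
  have IH: "?P n (t + h - u) \<sigma> s' = (\<Sum>j\<le>n. \<Sum>s''\<in>B. ?P j (t - u) \<sigma> s'' * ?P (n - j) h s'' s')"
    if "\<sigma> \<in> jump_supp r s" "u \<in> {0..t}" for \<sigma> u
    using Suc.IH[of "t - u" \<sigma>] Suc.prems that by (auto simp: algebra_simps)
  have jumps: "integral {0..t} (\<lambda>u. exp (- ?q * u) *
      (\<Sum>\<sigma>\<in>jump_supp r s. r s \<sigma> * ?P n (t + h - u) \<sigma> s')) =
      (\<Sum>j\<le>n. \<Sum>s''\<in>B. ?P (Suc j) t s s'' * ?P (n - j) h s'' s')"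
    unfolding sum_jump_trans_n_Suc[OF finite_atMost assms(3)]
    by (intro integral_cong) (simp add: IH cong: sum.cong)
  have "?P (Suc n) (t + h) s s' = (\<Sum>s''\<in>B. ?P 0 t s s'' * ?P (Suc n - 0) h s'' s') +
      (\<Sum>j\<le>n. \<Sum>s''\<in>B. ?P (Suc j) t s s'' * ?P (Suc n - Suc j) h s'' s')"
    unfolding jump_trans_n_Suc_add[OF Suc.prems(1) assms(2)] diff_Suc_Suc diff_zero no_jump jumps
    by (rule add.commute)
  thus ?case by (simp only: sum.atMost_Suc_shift)
qed

lemma chapman_kolmogorov_sum:
  assumes "0 \<le> t" "0 \<le> h" "finite B" "jump_reach r n s \<subseteq> B"
  shows "(\<Sum>s'\<in>A. jump_trans_n r n (t + h) s s' * g s') = (\<Sum>j\<le>n. \<Sum>s''\<in>B.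
    jump_trans_n r j t s s'' * (\<Sum>s'\<in>A. jump_trans_n r (n - j) h s'' s' * g s'))"
proof -
  let ?P = "jump_trans_n r"
  have "(\<Sum>s'\<in>A. ?P n (t + h) s s' * g s') =
      (\<Sum>s'\<in>A. \<Sum>j\<le>n. \<Sum>s''\<in>B. ?P j t s s'' * (?P (n - j) h s'' s' * g s'))"
    by (simp add: chapman_kolmogorov[OF assms] sum_distrib_right mult.assoc)
  also have "\<dots> = (\<Sum>j\<le>n. \<Sum>s''\<in>B. \<Sum>s'\<in>A. ?P j t s s'' * (?P (n - j) h s'' s' * g s'))"
    by (simp only: sum.swap[of _ A "{..n}"] sum.swap[of _ A B])
  finally show ?thesis by (simp add: sum_distrib_left)
qed

lemma sum_triangle_le_square:
  fixes Y :: "nat \<Rightarrow> nat \<Rightarrow> 'a::ordered_comm_monoid_add"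
  assumes "\<And>j l. 0 \<le> Y j l"
  shows "(\<Sum>n<N. \<Sum>j\<le>n. Y j (n - j)) \<le> (\<Sum>j<N. \<Sum>l<N. Y j l)"
proof -
  have "(\<Sum>n<N. \<Sum>j\<le>n. Y j (n - j)) = (\<Sum>(j, l)\<in>{(j, l). j + l < N}. Y j l)"
    by (rule sum.triangle_reindex[symmetric])
  also have "\<dots> \<le> (\<Sum>(j, l)\<in>{..<N} \<times> {..<N}. Y j l)"
    by (rule sum_mono2) (auto intro: assms)
  also have "\<dots> = (\<Sum>j<N. \<Sum>l<N. Y j l)"
    by (rule sum.cartesian_product[symmetric])
  finally show ?thesis .
qed

locale jump_chain =
  fixes r :: "'s \<Rightarrow> 's \<Rightarrow> real" and S :: "'s set"
  assumes rate_nonneg: "0 \<le> r s s'"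
    and supp_closed: "s \<in> S \<Longrightarrow> jump_supp r s \<subseteq> S"
    and finite_supp: "s \<in> S \<Longrightarrow> finite (jump_supp r s)"
begin

lemma trans_n_nonneg: "0 \<le> t \<Longrightarrow> 0 \<le> jump_trans_n r n t s s'"
proof (induction n arbitrary: s s' t)
  case (Suc n)
  show ?case unfolding jump_trans_n_Suc_integral
    by (rule integral_nonneg, intro integrable_continuous_interval continuous_on_exp_convolution
        continuous_intros jump_trans_n_continuous_on)
       (auto intro!: mult_nonneg_nonneg sum_nonneg rate_nonneg Suc.IH)
qed simp

lemma reach_subset: "s \<in> S \<Longrightarrow> jump_reach r n s \<subseteq> S"
proof (induction n arbitrary: s)
  case (Suc n)
  then show ?case using supp_closed by (simp add: UN_subset_iff) blast
qed simp

lemma finite_reach: "s \<in> S \<Longrightarrow> finite (jump_reach r n s)"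
proof (induction n arbitrary: s)
  case (Suc n)
  then show ?case using supp_closed finite_supp by auto
qed simp

lemma trans_n_eq_0_outside: "s \<in> S \<Longrightarrow> s' \<notin> S \<Longrightarrow> jump_trans_n r n t s s' = 0"
  using reach_subset by (intro jump_trans_n_eq_0) blast

lemma superharmonic_partial_sum_le:
  assumes m: "jump_superharmonic r S m" "\<And>s. s \<in> S \<Longrightarrow> 0 \<le> m s" and A: "finite A"
  shows "s \<in> S \<Longrightarrow> 0 \<le> t \<Longrightarrow> (\<Sum>n<N. \<Sum>s'\<in>A. jump_trans_n r n t s s' * m s') \<le> m s"
proof (induction N arbitrary: s t)
  case 0
  then show ?case using m(2) by simp
next
  case (Suc N)
  let ?P = "jump_trans_n r" and ?q = "jump_out r s" and ?S = "jump_supp r s"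
  define K where "K \<sigma> w = (\<Sum>n<N. \<Sum>s'\<in>A. ?P n w \<sigma> s' * m s')" for \<sigma> w
  have "(\<Sum>n<N. \<Sum>s'\<in>A. ?P (Suc n) t s s' * m s') =
      integral {0..t} (\<lambda>u. exp (- ?q * u) * (\<Sum>\<sigma>\<in>?S. r s \<sigma> * K \<sigma> (t - u)))"
    unfolding K_def using A by (simp add: sum_jump_trans_n_Suc)
  also have "\<dots> \<le> integral {0..t} (\<lambda>u. ?q * exp (- ?q * u) * m s)"
  proof (rule integral_le)
    show "(\<lambda>u. exp (- ?q * u) * (\<Sum>\<sigma>\<in>?S. r s \<sigma> * K \<sigma> (t - u))) integrable_on {0..t}"
      unfolding K_def by (intro integrable_continuous_interval continuous_on_exp_convolution
          continuous_intros jump_trans_n_continuous_on)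
    show "(\<lambda>u. ?q * exp (- ?q * u) * m s) integrable_on {0..t}"
      by (intro integrable_continuous_interval continuous_intros)
    fix u assume u: "u \<in> {0..t}"
    have "K \<sigma> (t - u) \<le> m \<sigma>" if "\<sigma> \<in> ?S" for \<sigma>
      using Suc.IH[of \<sigma> "t - u"] supp_closed[OF Suc.prems(1)] that u unfolding K_def by auto
    hence "(\<Sum>\<sigma>\<in>?S. r s \<sigma> * K \<sigma> (t - u)) \<le> (\<Sum>\<sigma>\<in>?S. r s \<sigma> * m \<sigma>)"
      by (intro sum_mono mult_left_mono rate_nonneg)
    also have "\<dots> \<le> ?q * m s"
      using m(1) Suc.prems(1) by (rule jump_superharmonicD)
    finally show "exp (- ?q * u) * (\<Sum>\<sigma>\<in>?S. r s \<sigma> * K \<sigma> (t - u)) \<le> ?q * exp (- ?q * u) * m s"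
      by (simp add: mult_left_mono mult.commute mult.left_commute)
  qed
  also have "\<dots> = (1 - exp (- ?q * t)) * m s"
    using integral_exp_density[OF Suc.prems(2), of ?q] by simp
  finally have jumps: "(\<Sum>n<N. \<Sum>s'\<in>A. ?P (Suc n) t s s' * m s') \<le> (1 - exp (- ?q * t)) * m s" .
  have "(\<Sum>s'\<in>A. ?P 0 t s s' * m s') \<le> exp (- ?q * t) * m s"
    using A m(2)[OF Suc.prems(1)] by (simp add: mult_delta_left)
  with jumps show ?case
    unfolding sum.lessThan_Suc_shift by (simp add: algebra_simps)
qed

lemma trans_n_partial_sum_le_1: "s \<in> S \<Longrightarrow> 0 \<le> t \<Longrightarrow> (\<Sum>n<N. jump_trans_n r n t s s') \<le> 1"
  using superharmonic_partial_sum_le[OF jump_superharmonic_const[of r S 1], of "{s'}"] by simp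

lemma summable_trans_n: "s \<in> S \<Longrightarrow> 0 \<le> t \<Longrightarrow> summable (\<lambda>n. jump_trans_n r n t s s')"
  by (rule summableI_nonneg_bounded[where x = 1])
     (auto intro: trans_n_nonneg trans_n_partial_sum_le_1)

lemma trans_n_partial_sum_le_trans:
  "s \<in> S \<Longrightarrow> 0 \<le> t \<Longrightarrow> (\<Sum>n<N. jump_trans_n r n t s s') \<le> jump_trans r t s s'"
  unfolding jump_trans_def by (intro sum_le_suminf summable_trans_n) (auto intro: trans_n_nonneg)

end

locale superharmonic_jump_chain = jump_chain +
  fixes m :: "'s \<Rightarrow> real"
  assumes m_nonneg: "s \<in> S \<Longrightarrow> 0 \<le> m s"
    and m_superharmonic: "jump_superharmonic r S m"
begin

lemma trans_n_mult_nonneg: "s \<in> S \<Longrightarrow> 0 \<le> t \<Longrightarrow> 0 \<le> jump_trans_n r n t s s' * m s'"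
  by (cases "s' \<in> S")
     (auto simp: trans_n_eq_0_outside intro!: mult_nonneg_nonneg trans_n_nonneg m_nonneg)

lemma trans_mult_eq_suminf:
  "s \<in> S \<Longrightarrow> 0 \<le> t \<Longrightarrow> jump_trans r t s s' * m s' = (\<Sum>n. jump_trans_n r n t s s' * m s')"
  unfolding jump_trans_def by (intro suminf_mult2 summable_trans_n)

lemma trans_mult_nonneg: "s \<in> S \<Longrightarrow> 0 \<le> t \<Longrightarrow> 0 \<le> jump_trans r t s s' * m s'"
  by (simp add: trans_mult_eq_suminf suminf_nonneg summable_mult2 summable_trans_n
      trans_n_mult_nonneg)

lemma summable_sum_trans_n_mult:
  "s \<in> S \<Longrightarrow> 0 \<le> t \<Longrightarrow> summable (\<lambda>n. \<Sum>s'\<in>A. jump_trans_n r n t s s' * m s')"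
  by (intro summable_sum summable_mult2 summable_trans_n)

lemma sum_trans_mult_eq_suminf: "s \<in> S \<Longrightarrow> 0 \<le> t \<Longrightarrow>
    (\<Sum>s'\<in>A. jump_trans r t s s' * m s') = (\<Sum>n. \<Sum>s'\<in>A. jump_trans_n r n t s s' * m s')"
  by (simp add: trans_mult_eq_suminf suminf_sum summable_mult2 summable_trans_n)

lemma summable_on_trans_mult:
  assumes "s \<in> S" "0 \<le> t"
  shows "(\<lambda>s'. jump_trans r t s s' * m s') summable_on UNIV"
proof (rule nonneg_bdd_above_summable_on)
  show "bdd_above (sum (\<lambda>s'. jump_trans r t s s' * m s') ` {A. A \<subseteq> UNIV \<and> finite A})"
    using assms m_superharmonic m_nonneg
    by (intro bdd_aboveI[where M = "m s"])
       (auto simp: sum_trans_mult_eq_suminf intro!: suminf_le_const summable_sum_trans_n_mult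
         superharmonic_partial_sum_le)
qed (use assms trans_mult_nonneg in auto)

lemma partial_sum_shift_le_expect:
  assumes s: "s \<in> S" and t: "0 \<le> t" and h: "0 \<le> h" and A: "finite A"
  shows "(\<Sum>n<N. \<Sum>s'\<in>A. jump_trans_n r n (t + h) s s' * m s') \<le> jump_expect r m t s"
proof -
  let ?P = "jump_trans_n r"
  define B where "B = jump_reach r N s"
  have B: "finite B" "B \<subseteq> S" unfolding B_def using s by (simp_all add: finite_reach reach_subset)
  define Y where "Y j l = (\<Sum>s''\<in>B. ?P j t s s'' * (\<Sum>s'\<in>A. ?P l h s'' s' * m s'))" for j l
  have Y_nonneg: "0 \<le> Y j l" for j l
    unfolding Y_def
  proof (intro sum_nonneg mult_nonneg_nonneg[OF trans_n_nonneg[OF t]])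
    fix s'' s' assume "s'' \<in> B"
    thus "0 \<le> ?P l h s'' s' * m s'" using B h by (intro trans_n_mult_nonneg) auto
  qed
  have "jump_reach r n s \<subseteq> B" if "n < N" for n
    using that unfolding B_def by (intro jump_reach_mono) simp
  hence "(\<Sum>n<N. \<Sum>s'\<in>A. ?P n (t + h) s s' * m s') = (\<Sum>n<N. \<Sum>j\<le>n. Y j (n - j))"
    unfolding Y_def using t h B(1) by (intro sum.cong refl chapman_kolmogorov_sum) auto
  also have "\<dots> \<le> (\<Sum>j<N. \<Sum>l<N. Y j l)"
    using Y_nonneg by (rule sum_triangle_le_square)
  also have "\<dots> = (\<Sum>j<N. \<Sum>s''\<in>B. ?P j t s s'' * (\<Sum>l<N. \<Sum>s'\<in>A. ?P l h s'' s' * m s'))"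
    by (simp add: Y_def sum_distrib_left sum.swap[of _ "{..<N}" B])
  also have "\<dots> \<le> (\<Sum>j<N. \<Sum>s''\<in>B. ?P j t s s'' * m s'')"
    using B t h A m_superharmonic m_nonneg
    by (intro sum_mono mult_left_mono trans_n_nonneg superharmonic_partial_sum_le) auto
  also have "\<dots> = (\<Sum>s''\<in>B. (\<Sum>j<N. ?P j t s s'') * m s'')"
    by (simp add: sum_distrib_right sum.swap[of _ "{..<N}" B])
  also have "\<dots> \<le> (\<Sum>s''\<in>B. jump_trans r t s s'' * m s'')"
    using B s t by (intro sum_mono mult_right_mono m_nonneg trans_n_partial_sum_le_trans) auto
  also have "\<dots> \<le> jump_expect r m t s"
    unfolding jump_expect_def using B s t
    by (intro finite_sum_le_infsum summable_on_trans_mult trans_mult_nonneg) auto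
  finally show ?thesis .
qed

lemma expect_antimono:
  assumes "s \<in> S" "0 \<le> t" "0 \<le> h"
  shows "jump_expect r m (t + h) s \<le> jump_expect r m t s"
  unfolding jump_expect_def[of r m "t + h"]
proof (rule infsum_le_finite_sums)
  show "(\<lambda>s'. jump_trans r (t + h) s s' * m s') summable_on UNIV"
    using assms by (intro summable_on_trans_mult) auto
  fix A :: "'s set" assume "finite A"
  thus "(\<Sum>s'\<in>A. jump_trans r (t + h) s s' * m s') \<le> jump_expect r m t s"
    using assms
    by (simp add: sum_trans_mult_eq_suminf)
       (intro suminf_le_const summable_sum_trans_n_mult partial_sum_shift_le_expect; simp)
qed

lemma expect_nonneg: "s \<in> S \<Longrightarrow> 0 \<le> t \<Longrightarrow> 0 \<le> jump_expect r m t s"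
  unfolding jump_expect_def by (intro infsum_nonneg trans_mult_nonneg)

theorem expect_tendsto:
  assumes "s \<in> S"
  shows "((\<lambda>t. jump_expect r m t s) \<longlongrightarrow> Inf ((\<lambda>t. jump_expect r m t s) ` {0..})) at_top"
proof (rule antimono_bounded_tendsto)
  fix t t' :: real assume "0 \<le> t" "t \<le> t'"
  thus "jump_expect r m t' s \<le> jump_expect r m t s"
    using expect_antimono[OF assms, of t "t' - t"] by simp
qed (use assms expect_nonneg in auto)

end

section \<open>The walkers-with-knowledge chain\<close>

lemma wk_trans_n_eq_jump_trans_n:
  "wk_trans_n R v p n t s s' = jump_trans_n (wk_rate R v p) n t s s'"
  by (induction n arbitrary: t s)
     (simp_all add: jump_trans_n.simps wk_supp_def wk_out_def jump_supp_def jump_out_def)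

definition mubar_state :: "real \<Rightarrow> ((int ^ 'd::finite \<Rightarrow> bool) \<times> ((int ^ 'd) set \<Rightarrow> bool)) measure
    \<Rightarrow> 'd wstate \<Rightarrow> real" where
  "mubar_state p \<mu> s = mubar p \<mu> (set (fst s)) (fst (snd s)) (snd (snd s))"

lemma wk_expect_eq_jump_expect:
  "wk_expect R v p \<mu> t s = jump_expect (wk_rate R v p) (mubar_state p \<mu>) t s"
  unfolding wk_expect_def jump_expect_def wk_trans_def jump_trans_def mubar_state_def
    wk_trans_n_eq_jump_trans_n ..

definition wk_states :: "'d::finite wstate set" where
  "wk_states = {(xs, E, F). finite E \<and> finite F \<and> E \<inter> F = {} \<and> E \<subseteq> edges \<and> F \<subseteq> edges}"

definition unexplored :: "nat \<Rightarrow> int ^ 'd::finite \<Rightarrow> (int ^ 'd) set set \<Rightarrow> (int ^ 'd) set set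
    \<Rightarrow> (int ^ 'd) set set" where
  "unexplored R x E F = edges_ball x R - (E \<union> F)"

definition edge_weight :: "real \<Rightarrow> 'e set \<Rightarrow> 'e set \<Rightarrow> real" where
  "edge_weight p E F = p ^ card E * (1 - p) ^ card F"

fun forget_edge :: "'d::finite wstate \<Rightarrow> (int ^ 'd) set \<Rightarrow> 'd wstate" where
  "forget_edge (xs, E, F) e = (xs, E - {e}, F - {e})"

fun walker_move :: "nat \<Rightarrow> 'd::finite wstate \<Rightarrow> nat \<Rightarrow> int ^ 'd \<Rightarrow> (int ^ 'd) set set
    \<Rightarrow> 'd wstate" where
  "walker_move R (xs, E, F) i y E' =
     ((if conn (\<lambda>e. e \<in> E \<union> E') (ball1 (xs ! i) R) (xs ! i) y then xs[i := y] else xs),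
      E \<union> E', F \<union> (unexplored R (xs ! i) E F - E'))"

fun wk_targets :: "nat \<Rightarrow> 'd::finite wstate \<Rightarrow> 'd wstate set" where
  "wk_targets R (xs, E, F) = forget_edge (xs, E, F) ` (E \<union> F) \<union>
     (\<Union>i<length xs. \<Union>y\<in>ball1 (xs ! i) R - {xs ! i}.
        walker_move R (xs, E, F) i y ` Pow (unexplored R (xs ! i) E F))"

lemma finite_unexplored: "finite (unexplored R x E F)"
  unfolding unexplored_def by (simp add: finite_edges_ball)

lemma unexplored_subset_edges: "unexplored R x E F \<subseteq> edges"
  unfolding unexplored_def using edges_ball_subset_edges by blast

lemma unexplored_disjoint: "unexplored R x E F \<inter> (E \<union> F) = {}"
  unfolding unexplored_def by blast

lemma wk_rate_eq:
  fixes xs :: "(int ^ 'd::finite) list"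
  assumes "finite E" "finite F"
  shows "wk_rate R v p (xs, E, F) s' = (if s' = (xs, E, F) then 0 else
     v * (\<Sum>e\<in>E \<union> F. if s' = forget_edge (xs, E, F) e then 1 else 0) +
     (\<Sum>i<length xs. \<Sum>y\<in>ball1 (xs ! i) R - {xs ! i}. \<Sum>E'\<in>Pow (unexplored R (xs ! i) E F).
        if s' = walker_move R (xs, E, F) i y E'
        then edge_weight p E' (unexplored R (xs ! i) E F - E') * jrate TYPE('d) R else 0))"
proof -
  have card_eq: "real (card {e \<in> E \<union> F. s' = (xs, E - {e}, F - {e})}) =
      (\<Sum>e\<in>E \<union> F. if s' = (xs, E - {e}, F - {e}) then 1 else 0)"
    using assms by (simp add: sum.inter_filter[symmetric])
  show ?thesis
    unfolding card_eq wk_rate_def Let_def prod.case walker_move.simps forget_edge.simps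
      unexplored_def edge_weight_def ..
qed

lemma wk_rate_nonneg:
  fixes s :: "'d::finite wstate"
  assumes "0 \<le> p" "p \<le> 1" "0 \<le> v"
  shows "0 \<le> wk_rate R v p s s'"
proof -
  have "0 \<le> (if b then p ^ k * (1 - p) ^ l * jrate TYPE('d) R else 0)" for b k l
    using assms jrate_nonneg[where 'd = 'd and R = R] by simp
  thus ?thesis
    using assms unfolding wk_rate_def Let_def
    by (auto split: prod.splits intro!: sum_nonneg add_nonneg_nonneg mult_nonneg_nonneg)
qed

lemma wk_supp_subset_targets:
  fixes xs :: "(int ^ 'd::finite) list"
  assumes "finite E" "finite F"
  shows "jump_supp (wk_rate R v p) (xs, E, F) \<subseteq> wk_targets R (xs, E, F)"
proof
  fix s' assume supp: "s' \<in> jump_supp (wk_rate R v p) (xs, E, F)"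
  show "s' \<in> wk_targets R (xs, E, F)"
  proof (rule ccontr)
    assume not_target: "s' \<notin> wk_targets R (xs, E, F)"
    have no_forget: "(\<Sum>e\<in>E \<union> F. if s' = forget_edge (xs, E, F) e then 1 else 0) = (0 :: real)"
      using not_target by (intro sum.neutral) (auto simp del: forget_edge.simps)
    have no_move: "s' \<noteq> walker_move R (xs, E, F) i y E'"
      if "i < length xs" "y \<in> ball1 (xs ! i) R - {xs ! i}" "E' \<subseteq> unexplored R (xs ! i) E F"
      for i y E'
      using not_target that by (force simp del: walker_move.simps)
    have "(\<Sum>i<length xs. \<Sum>y\<in>ball1 (xs ! i) R - {xs ! i}.
        \<Sum>E'\<in>Pow (unexplored R (xs ! i) E F). if s' = walker_move R (xs, E, F) i y E'
          then edge_weight p E' (unexplored R (xs ! i) E F - E') * jrate TYPE('d) R else 0) = 0"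
      using no_move by (intro sum.neutral ballI) simp
    with no_forget have "wk_rate R v p (xs, E, F) s' = 0"
      by (simp add: wk_rate_eq[OF assms] del: walker_move.simps forget_edge.simps)
    thus False using supp by (simp add: jump_supp_def)
  qed
qed

lemma finite_wk_targets:
  assumes "finite E" "finite F"
  shows "finite (wk_targets R (xs, E, F))"
  using assms by (auto simp del: walker_move.simps intro!: finite_ball1 finite_unexplored)

lemma wk_targets_subset_states:
  assumes "(xs, E, F) \<in> wk_states"
  shows "wk_targets R (xs, E, F) \<subseteq> wk_states"
proof -
  have "(xs', E \<union> E', F \<union> (unexplored R x E F - E')) \<in> wk_states"
    if "E' \<subseteq> unexplored R x E F" for xs' x E'
  proof -
    have "finite E'" using that finite_unexplored by (rule finite_subset)
    moreover have "(E \<union> E') \<inter> (F \<union> (unexplored R x E F - E')) = {}"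
      using assms that unexplored_disjoint[of R x E F] by (auto simp: wk_states_def)
    moreover have "E' \<subseteq> edges" using that unexplored_subset_edges by blast
    ultimately show ?thesis
      using assms finite_unexplored[of R x E F] unexplored_subset_edges[of R x E F]
      by (auto simp: wk_states_def)
  qed
  moreover have "forget_edge (xs, E, F) e \<in> wk_states" for e
    using assms by (auto simp: wk_states_def)
  ultimately show ?thesis by auto
qed

lemma wk_jump_chain:
  assumes "0 \<le> p" "p \<le> 1" "0 \<le> v"
  shows "jump_chain (wk_rate R v p) (wk_states :: 'd::finite wstate set)"
proof
  fix s s' :: "'d wstate"
  show "0 \<le> wk_rate R v p s s'" using assms by (rule wk_rate_nonneg)
next
  fix s :: "'d wstate" assume s_state: "s \<in> wk_states"
  obtain xs E F where s: "s = (xs, E, F)" by (cases s)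
  with s_state have fin: "finite E" "finite F" by (auto simp: wk_states_def)
  show "jump_supp (wk_rate R v p) s \<subseteq> wk_states"
    using s_state unfolding s
    by (intro subset_trans[OF wk_supp_subset_targets[OF fin] wk_targets_subset_states])
  show "finite (jump_supp (wk_rate R v p) s)"
    unfolding s using finite_wk_targets[OF fin] wk_supp_subset_targets[OF fin]
    by (rule finite_subset[rotated])
qed

lemma sum_delta_weights:
  fixes w :: "'k \<Rightarrow> 'a::semiring_0"
  assumes "finite T" "\<And>k. k \<in> K \<Longrightarrow> f k \<in> T"
  shows "(\<Sum>\<sigma>\<in>T. (\<Sum>k\<in>K. if \<sigma> = f k then w k else 0) * g \<sigma>) = (\<Sum>k\<in>K. w k * g (f k))"
proof -
  have "(\<Sum>\<sigma>\<in>T. (\<Sum>k\<in>K. if \<sigma> = f k then w k else 0) * g \<sigma>) =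
      (\<Sum>k\<in>K. \<Sum>\<sigma>\<in>T. (if \<sigma> = f k then w k else 0) * g \<sigma>)"
    unfolding sum_distrib_right by (rule sum.swap)
  also have "\<dots> = (\<Sum>k\<in>K. w k * g (f k))"
    using assms by (intro sum.cong refl) (simp add: mult_delta_left)
  finally show ?thesis .
qed

lemma wk_generator:
  fixes xs :: "(int ^ 'd::finite) list" and \<phi> :: "'d wstate \<Rightarrow> real"
  assumes "finite E" "finite F"
  shows "(\<Sum>\<sigma>\<in>jump_supp (wk_rate R v p) (xs, E, F).
      wk_rate R v p (xs, E, F) \<sigma> * (\<phi> \<sigma> - \<phi> (xs, E, F))) =
    v * (\<Sum>e\<in>E \<union> F. \<phi> (forget_edge (xs, E, F) e) - \<phi> (xs, E, F)) +
    (\<Sum>i<length xs. \<Sum>y\<in>ball1 (xs ! i) R - {xs ! i}. \<Sum>E'\<in>Pow (unexplored R (xs ! i) E F).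
       edge_weight p E' (unexplored R (xs ! i) E F - E') * jrate TYPE('d) R *
       (\<phi> (walker_move R (xs, E, F) i y E') - \<phi> (xs, E, F)))"
proof -
  let ?s = "(xs, E, F)" and ?T = "wk_targets R (xs, E, F)"
  let ?w = "\<lambda>i E'. edge_weight p E' (unexplored R (xs ! i) E F - E') * jrate TYPE('d) R"
  define g where "g \<sigma> = \<phi> \<sigma> - \<phi> ?s" for \<sigma>
  define A where "A \<sigma> = (\<Sum>e\<in>E \<union> F. if \<sigma> = forget_edge ?s e then 1 else 0 :: real)" for \<sigma>
  define B where "B \<sigma> = (\<Sum>i<length xs. \<Sum>y\<in>ball1 (xs ! i) R - {xs ! i}.
    \<Sum>E'\<in>Pow (unexplored R (xs ! i) E F). if \<sigma> = walker_move R ?s i y E' then ?w i E' else 0)"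
    for \<sigma>
  have T: "finite ?T" using assms by (rule finite_wk_targets)
  have "(\<Sum>\<sigma>\<in>jump_supp (wk_rate R v p) ?s. wk_rate R v p ?s \<sigma> * g \<sigma>) =
      (\<Sum>\<sigma>\<in>?T. wk_rate R v p ?s \<sigma> * g \<sigma>)"
    using T wk_supp_subset_targets[OF assms]
    by (intro sum.mono_neutral_left) (auto simp: jump_supp_def)
  also have "\<dots> = (\<Sum>\<sigma>\<in>?T. (v * A \<sigma> + B \<sigma>) * g \<sigma>)"
    by (intro sum.cong refl)
       (simp add: wk_rate_eq[OF assms] A_def B_def g_def del: walker_move.simps)
  also have "\<dots> = v * (\<Sum>\<sigma>\<in>?T. A \<sigma> * g \<sigma>) + (\<Sum>\<sigma>\<in>?T. B \<sigma> * g \<sigma>)"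
    by (simp add: distrib_right sum.distrib sum_distrib_left mult.assoc)
  also have "(\<Sum>\<sigma>\<in>?T. A \<sigma> * g \<sigma>) = (\<Sum>e\<in>E \<union> F. 1 * g (forget_edge ?s e))"
    unfolding A_def by (rule sum_delta_weights[OF T]) (simp del: forget_edge.simps)
  also have "(\<Sum>\<sigma>\<in>?T. B \<sigma> * g \<sigma>) = (\<Sum>i<length xs. \<Sum>y\<in>ball1 (xs ! i) R - {xs ! i}.
      \<Sum>E'\<in>Pow (unexplored R (xs ! i) E F). ?w i E' * g (walker_move R ?s i y E'))"
    unfolding B_def
    by (subst sum_distrib_right, subst sum.swap, intro sum.cong refl,
        subst sum_distrib_right, subst sum.swap, intro sum.cong refl sum_delta_weights[OF T])
       (simp del: walker_move.simps; blast)
  finally show ?thesis by (simp add: g_def)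
qed

section \<open>Cylinder events\<close>

definition cyl_event :: "(int ^ 'd::finite) set \<Rightarrow> (int ^ 'd) set set \<Rightarrow> (int ^ 'd) set set
    \<Rightarrow> ((int ^ 'd \<Rightarrow> bool) \<times> ((int ^ 'd) set \<Rightarrow> bool)) set" where
  "cyl_event C E F = {c. (\<forall>x\<in>C. fst c x) \<and> (\<forall>e\<in>E. snd c e) \<and> (\<forall>e\<in>F. \<not> snd c e)}"

definition cyl_indicator :: "(int ^ 'd::finite \<Rightarrow> bool) \<times> ((int ^ 'd) set \<Rightarrow> bool)
    \<Rightarrow> (int ^ 'd) set \<Rightarrow> (int ^ 'd) set set \<Rightarrow> (int ^ 'd) set set \<Rightarrow> real" where
  "cyl_indicator c C E F = indicator (cyl_event C E F) c"

definition cyl_prob :: "((int ^ 'd::finite \<Rightarrow> bool) \<times> ((int ^ 'd) set \<Rightarrow> bool)) measure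
    \<Rightarrow> (int ^ 'd) set \<Rightarrow> (int ^ 'd) set set \<Rightarrow> (int ^ 'd) set set \<Rightarrow> real" where
  "cyl_prob \<mu> C E F = measure \<mu> (cyl_event C E F \<inter> space \<mu>)"

lemma mubar_eq_cyl_prob: "mubar p \<mu> C E F = cyl_prob \<mu> C E F / edge_weight p E F"
proof -
  have "{c \<in> space \<mu>. (\<forall>x\<in>C. fst c x) \<and> (\<forall>e\<in>E. snd c e) \<and> (\<forall>e\<in>F. \<not> snd c e)} =
      cyl_event C E F \<inter> space \<mu>"
    unfolding cyl_event_def by auto
  thus ?thesis
    unfolding mubar_def cyl_prob_def edge_weight_def by (simp add: divide_inverse mult.commute)
qed

lemma sets_cyl_event:
  assumes "finite C" "finite E" "finite F" "E \<subseteq> edges" "F \<subseteq> edges"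
  shows "cyl_event C E F \<inter> space cfg_space \<in> sets cfg_space"
proof -
  have fst_pred: "Measurable.pred cfg_space (\<lambda>c. fst c x)" for x :: "int ^ 'd"
    unfolding cfg_space_def by measurable
  have snd_pred: "Measurable.pred cfg_space (\<lambda>c. snd c e)" if "e \<in> edges" for e
    using that unfolding cfg_space_def by measurable
  have "Measurable.pred cfg_space
      (\<lambda>c. (\<forall>x\<in>C. fst c x) \<and> (\<forall>e\<in>E. snd c e) \<and> (\<forall>e\<in>F. \<not> snd c e))"
    using assms fst_pred snd_pred by (intro pred_intros_logic pred_intros_finite) auto
  moreover have "cyl_event C E F \<inter> space cfg_space =
      {c \<in> space cfg_space. (\<forall>x\<in>C. fst c x) \<and> (\<forall>e\<in>E. snd c e) \<and> (\<forall>e\<in>F. \<not> snd c e)}"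
    unfolding cyl_event_def by auto
  ultimately show ?thesis by (simp add: predE)
qed

lemma cyl_indicator_explored:
  assumes "E' \<subseteq> D" "D \<inter> (E \<union> F) = {}"
  shows "cyl_indicator c C (E \<union> E') (F \<union> (D - E')) =
    (if E' = {e \<in> D. snd c e} then cyl_indicator c C E F else 0)"
proof -
  have "c \<in> cyl_event C (E \<union> E') (F \<union> (D - E')) \<longleftrightarrow>
      c \<in> cyl_event C E F \<and> E' = {e \<in> D. snd c e}"
    using assms unfolding cyl_event_def by auto
  thus ?thesis unfolding cyl_indicator_def by (auto simp: indicator_def)
qed

lemma cyl_indicator_explore:
  assumes "finite D" "D \<inter> (E \<union> F) = {}"
  shows "cyl_indicator c C E F = (\<Sum>E'\<in>Pow D. cyl_indicator c C (E \<union> E') (F \<union> (D - E')))"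
proof -
  have "(\<Sum>E'\<in>Pow D. cyl_indicator c C (E \<union> E') (F \<union> (D - E'))) =
      (\<Sum>E'\<in>Pow D. if E' = {e \<in> D. snd c e} then cyl_indicator c C E F else 0)"
    using assms(2) by (intro sum.cong refl cyl_indicator_explored) auto
  also have "\<dots> = cyl_indicator c C E F" using assms(1) by (simp add: sum.delta')
  finally show ?thesis by simp
qed

lemma sum_edge_weight_Pow: "finite D \<Longrightarrow> (\<Sum>E'\<in>Pow D. edge_weight p E' (D - E')) = 1"
proof -
  assume "finite D"
  hence "(\<Prod>e\<in>D. p + (1 - p)) = (\<Sum>E'\<in>Pow D. (\<Prod>e\<in>E'. p) * (\<Prod>e\<in>D - E'. 1 - p))"
    by (rule prod_add)
  thus ?thesis by (simp add: edge_weight_def)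
qed

lemma edge_weight_Un:
  assumes "finite E" "finite F" "finite D" "E' \<subseteq> D" "D \<inter> (E \<union> F) = {}" "E \<inter> F = {}"
  shows "edge_weight p (E \<union> E') (F \<union> (D - E')) = edge_weight p E F * edge_weight p E' (D - E')"
proof -
  have "card (E \<union> E') = card E + card E'"
    using assms by (intro card_Un_disjoint) (auto intro: finite_subset)
  moreover have "card (F \<union> (D - E')) = card F + card (D - E')"
    using assms by (intro card_Un_disjoint) auto
  ultimately show ?thesis unfolding edge_weight_def by (simp add: power_add mult_ac)
qed

lemma edge_weight_remove_open:
  assumes "finite E" "e \<in> E"
  shows "edge_weight p E F = p * edge_weight p (E - {e}) F"
  unfolding edge_weight_def card.remove[OF assms] by (simp only: power_Suc mult.assoc)

lemma edge_weight_remove_closed: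
  assumes "finite F" "e \<in> F"
  shows "edge_weight p E F = (1 - p) * edge_weight p E (F - {e})"
  unfolding edge_weight_def card.remove[OF assms] by (simp only: power_Suc mult.left_commute)

lemma edge_weight_pos: "0 < p \<Longrightarrow> p < 1 \<Longrightarrow> 0 < edge_weight p E F"
  unfolding edge_weight_def by simp

lemma mubar_state_nonneg: "0 < p \<Longrightarrow> p < 1 \<Longrightarrow> 0 \<le> mubar_state p \<mu> s"
  unfolding mubar_state_def mubar_eq_cyl_prob cyl_prob_def
  by (intro divide_nonneg_pos measure_nonneg edge_weight_pos)

lemma mubar_state_forget_edge:
  assumes "0 < p" "p < 1" "(xs, E, F) \<in> wk_states" "e \<in> E \<union> F"
  shows "v * (mubar_state p \<mu> (forget_edge (xs, E, F) e) - mubar_state p \<mu> (xs, E, F)) =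
    ((if e \<in> E then p * v * cyl_prob \<mu> (set xs) (E - {e}) F
      else (1 - p) * v * cyl_prob \<mu> (set xs) E (F - {e})) - v * cyl_prob \<mu> (set xs) E F)
    / edge_weight p E F"
proof (cases "e \<in> E")
  case True
  with assms(3) have "F - {e} = F" "finite E" by (auto simp: wk_states_def)
  moreover have N: "edge_weight p E F = p * edge_weight p (E - {e}) F"
    using \<open>finite E\<close> True by (rule edge_weight_remove_open)
  moreover have "0 < edge_weight p (E - {e}) F" using assms(1,2) by (rule edge_weight_pos)
  ultimately show ?thesis
    using True assms(1) by (simp add: mubar_state_def mubar_eq_cyl_prob N field_simps)
next
  case False
  with assms have "e \<in> F" "finite F" by (auto simp: wk_states_def)
  hence N: "edge_weight p E F = (1 - p) * edge_weight p E (F - {e})"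
    by (intro edge_weight_remove_closed)
  have "0 < edge_weight p E (F - {e})" using assms(1,2) by (rule edge_weight_pos)
  thus ?thesis
    using False assms(2) by (simp add: mubar_state_def mubar_eq_cyl_prob N field_simps)
qed

lemma edge_weight_mubar_state_walker_move:
  fixes R i :: nat
  assumes "0 < p" "p < 1" "(xs, E, F) \<in> wk_states" "E' \<subseteq> unexplored R (xs ! i) E F"
  shows "edge_weight p E' (unexplored R (xs ! i) E F - E') *
      mubar_state p \<mu> (walker_move R (xs, E, F) i y E') =
    cyl_prob \<mu> (set (if conn (\<lambda>e. e \<in> E \<union> E') (ball1 (xs ! i) R) (xs ! i) y
      then xs[i := y] else xs)) (E \<union> E') (F \<union> (unexplored R (xs ! i) E F - E')) / edge_weight p E F"
proof -
  have "edge_weight p (E \<union> E') (F \<union> (unexplored R (xs ! i) E F - E')) =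
      edge_weight p E F * edge_weight p E' (unexplored R (xs ! i) E F - E')"
    using assms(3,4) finite_unexplored[of R "xs ! i" E F] unexplored_disjoint[of R "xs ! i" E F]
    by (intro edge_weight_Un) (auto simp: wk_states_def)
  moreover have "0 < edge_weight p E F" "0 < edge_weight p E' (unexplored R (xs ! i) E F - E')"
    using assms(1,2) by (simp_all add: edge_weight_pos)
  ultimately show ?thesis by (simp add: mubar_state_def mubar_eq_cyl_prob)
qed

section \<open>Duality between the voter model and the walkers\<close>

(* The change of Q caused by the walker at x attempting jumps to the sites y of its ball: the
   unexplored edges of B_1(x, R) are revealed, E' open and the others closed, and the jump
   succeeds iff x and y are connected through open edges inside the ball, the occupied set then
   becoming Z y. *)
definition move_gain :: "((int ^ 'd::finite) set \<Rightarrow> (int ^ 'd) set set \<Rightarrow> (int ^ 'd) set set \<Rightarrow> real)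
    \<Rightarrow> nat \<Rightarrow> (int ^ 'd) set \<Rightarrow> (int ^ 'd) set set \<Rightarrow> (int ^ 'd) set set \<Rightarrow> int ^ 'd
    \<Rightarrow> (int ^ 'd \<Rightarrow> (int ^ 'd) set) \<Rightarrow> real" where
  "move_gain Q R C E F x Z = (\<Sum>y\<in>ball1 x R - {x}. jrate TYPE('d) R *
     (\<Sum>E'\<in>Pow (unexplored R x E F). of_bool (conn (\<lambda>e. e \<in> E \<union> E') (ball1 x R) x y) *
        (Q (Z y) (E \<union> E') (F \<union> (unexplored R x E F - E')) -
         Q C (E \<union> E') (F \<union> (unexplored R x E F - E')))))"

(* The change of Q caused by the known edges being refreshed. *)
definition flip_gain :: "((int ^ 'd::finite) set \<Rightarrow> (int ^ 'd) set set \<Rightarrow> (int ^ 'd) set set \<Rightarrow> real)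
    \<Rightarrow> real \<Rightarrow> real \<Rightarrow> (int ^ 'd) set \<Rightarrow> (int ^ 'd) set set \<Rightarrow> (int ^ 'd) set set \<Rightarrow> real" where
  "flip_gain Q p v C E F = (\<Sum>e\<in>E \<union> F.
     (if e \<in> E then p * v * Q C (E - {e}) F else (1 - p) * v * Q C E (F - {e})) - v * Q C E F)"

lemma cyl_indicator_jump:
  fixes \<eta> :: "int ^ 'd::finite \<Rightarrow> bool" and \<zeta> :: "(int ^ 'd) set \<Rightarrow> bool"
  assumes "x \<in> C" "E \<inter> F = {}"
  defines "c \<equiv> (\<eta>, \<zeta>)"
  shows "(if conn \<zeta> (ball1 x R) x y
      then cyl_indicator (\<eta>(x := \<eta> y), \<zeta>) C E F - cyl_indicator c C E F else 0) =
    (\<Sum>E'\<in>Pow (unexplored R x E F). of_bool (conn (\<lambda>e. e \<in> E \<union> E') (ball1 x R) x y) *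
       (cyl_indicator c (insert y (C - {x})) (E \<union> E') (F \<union> (unexplored R x E F - E')) -
        cyl_indicator c C (E \<union> E') (F \<union> (unexplored R x E F - E'))))"
proof -
  define D where "D = unexplored R x E F"
  define E0 where "E0 = {e \<in> D. \<zeta> e}"
  have D: "finite D" "D \<inter> (E \<union> F) = {}"
    unfolding D_def by (simp_all add: finite_unexplored unexplored_disjoint)
  have moved: "cyl_indicator (\<eta>(x := \<eta> y), \<zeta>) C E F = cyl_indicator c (insert y (C - {x})) E F"
    using assms(1) unfolding c_def cyl_indicator_def cyl_event_def indicator_def by auto
  have "(\<Sum>E'\<in>Pow D. of_bool (conn (\<lambda>e. e \<in> E \<union> E') (ball1 x R) x y) *
      (cyl_indicator c (insert y (C - {x})) (E \<union> E') (F \<union> (D - E')) -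
       cyl_indicator c C (E \<union> E') (F \<union> (D - E')))) =
    (\<Sum>E'\<in>Pow D. if E' = E0 then of_bool (conn (\<lambda>e. e \<in> E \<union> E0) (ball1 x R) x y) *
      (cyl_indicator c (insert y (C - {x})) E F - cyl_indicator c C E F) else 0)"
    using D(2) by (intro sum.cong refl) (auto simp: cyl_indicator_explored E0_def c_def)
  also have "\<dots> = of_bool (conn (\<lambda>e. e \<in> E \<union> E0) (ball1 x R) x y) *
      (cyl_indicator c (insert y (C - {x})) E F - cyl_indicator c C E F)"
    using D(1) by (simp add: sum.delta' E0_def)
  also have "\<dots> = (if conn \<zeta> (ball1 x R) x y
      then cyl_indicator c (insert y (C - {x})) E F - cyl_indicator c C E F else 0)"
  proof (cases "c \<in> cyl_event (insert y (C - {x})) E F \<or> c \<in> cyl_event C E F")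
    case True
    hence "\<forall>e\<in>E. \<zeta> e" "\<forall>e\<in>F. \<not> \<zeta> e" unfolding cyl_event_def c_def by auto
    hence "conn \<zeta> (ball1 x R) x y = conn (\<lambda>e. e \<in> E \<union> E0) (ball1 x R) x y"
      using assms(2) by (intro conn_cong) (auto simp: E0_def D_def unexplored_def c_def)
    thus ?thesis by simp
  next
    case False
    thus ?thesis by (simp add: cyl_indicator_def)
  qed
  finally show ?thesis unfolding D_def moved by simp
qed

lemma cyl_indicator_flip:
  fixes \<eta> :: "int ^ 'd::finite \<Rightarrow> bool" and \<zeta> :: "(int ^ 'd) set \<Rightarrow> bool"
  assumes "e \<in> E \<union> F" "E \<inter> F = {}"
  defines "c \<equiv> (\<eta>, \<zeta>)"
  shows "p * v * (cyl_indicator (\<eta>, \<zeta>(e := True)) C E F - cyl_indicator c C E F) +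
      (1 - p) * v * (cyl_indicator (\<eta>, \<zeta>(e := False)) C E F - cyl_indicator c C E F) =
    (if e \<in> E then p * v * cyl_indicator c C (E - {e}) F
     else (1 - p) * v * cyl_indicator c C E (F - {e})) - v * cyl_indicator c C E F"
proof (cases "e \<in> E")
  case True
  with assms(2) have "e \<notin> F" by blast
  with True have "cyl_indicator (\<eta>, \<zeta>(e := True)) C E F = cyl_indicator c C (E - {e}) F"
    and "cyl_indicator (\<eta>, \<zeta>(e := False)) C E F = 0"
    unfolding c_def cyl_indicator_def cyl_event_def indicator_def by auto
  with True show ?thesis by (simp add: algebra_simps)
next
  case False
  with assms(1) have "e \<in> F" by blast
  with False have "cyl_indicator (\<eta>, \<zeta>(e := True)) C E F = 0"
    and "cyl_indicator (\<eta>, \<zeta>(e := False)) C E F = cyl_indicator c C E (F - {e})"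
    unfolding c_def cyl_indicator_def cyl_event_def indicator_def by auto
  with False show ?thesis by (simp add: algebra_simps)
qed

lemma voter_gen_cyl_indicator:
  fixes C :: "(int ^ 'd::finite) set"
  assumes "E \<inter> F = {}"
  shows "voter_gen R v p TYPE('d) C (E \<union> F) (\<lambda>c. cyl_indicator c C E F) c =
    (\<Sum>x\<in>C. move_gain (cyl_indicator c) R C E F x (\<lambda>y. insert y (C - {x})))
    + flip_gain (cyl_indicator c) p v C E F"
proof -
  obtain \<eta> \<zeta> where c: "c = (\<eta>, \<zeta>)" by (cases c)
  have jump: "(\<Sum>y\<in>ball1 x R - {x}. jrate TYPE('d) R * (if conn \<zeta> (ball1 x R) x y
      then cyl_indicator (\<eta>(x := \<eta> y), \<zeta>) C E F - cyl_indicator c C E F else 0)) =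
    move_gain (cyl_indicator c) R C E F x (\<lambda>y. insert y (C - {x}))" if "x \<in> C" for x
    unfolding move_gain_def c cyl_indicator_jump[OF that assms] ..
  have flip: "p * v * (cyl_indicator (\<eta>, \<zeta>(e := True)) C E F - cyl_indicator c C E F) +
      (1 - p) * v * (cyl_indicator (\<eta>, \<zeta>(e := False)) C E F - cyl_indicator c C E F) =
    (if e \<in> E then p * v * cyl_indicator c C (E - {e}) F
     else (1 - p) * v * cyl_indicator c C E (F - {e})) - v * cyl_indicator c C E F"
    if "e \<in> E \<union> F" for e
    unfolding c by (rule cyl_indicator_flip[OF that assms])
  show ?thesis
    unfolding voter_gen_def c prod.case ball1_minus_center flip_gain_def
    by (intro arg_cong2[where f = "(+)"] sum.cong refl;
        rule jump[unfolded c] flip[unfolded c]; assumption)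
qed

lemma integral_sum_mult:
  fixes f :: "'i \<Rightarrow> 'a \<Rightarrow> real"
  assumes "\<And>i. i \<in> I \<Longrightarrow> integrable M (f i)" "\<And>i. i \<in> I \<Longrightarrow> (\<integral>x. f i x \<partial>M) = b i"
  shows "integrable M (\<lambda>x. \<Sum>i\<in>I. a i * f i x)"
    and "(\<integral>x. (\<Sum>i\<in>I. a i * f i x) \<partial>M) = (\<Sum>i\<in>I. a i * b i)"
  using assms by (simp_all add: Bochner_Integration.integral_sum cong: sum.cong)

context
  fixes \<mu> :: "((int ^ 'd::finite \<Rightarrow> bool) \<times> ((int ^ 'd) set \<Rightarrow> bool)) measure"
  assumes prob_\<mu>: "prob_space \<mu>" and sets_\<mu>: "sets \<mu> = sets cfg_space"
begin

lemma integrable_cyl_indicator: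
  assumes "finite C" "finite E" "finite F" "E \<subseteq> edges" "F \<subseteq> edges"
  shows "integrable \<mu> (\<lambda>c. cyl_indicator c C E F)"
proof -
  have "cyl_event C E F \<inter> space \<mu> \<in> sets \<mu>"
    using sets_cyl_event[OF assms] sets_\<mu> sets_eq_imp_space_eq[OF sets_\<mu>] by simp
  moreover have "emeasure \<mu> (cyl_event C E F \<inter> space \<mu>) < \<infinity>"
    using prob_\<mu> by (simp add: prob_space.emeasure_le_1 less_top[symmetric]
        finite_measure.emeasure_finite prob_space.finite_measure)
  ultimately show ?thesis
    unfolding cyl_indicator_def by (simp add: integrable_indicator_iff)
qed

lemma integral_cyl_indicator: "(\<integral>c. cyl_indicator c C E F \<partial>\<mu>) = cyl_prob \<mu> C E F"
  by (simp add: cyl_indicator_def cyl_prob_def)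

lemma cyl_prob_antimono:
  assumes "finite C" "finite E" "finite F" "E \<subseteq> edges" "F \<subseteq> edges" "C \<subseteq> C'"
  shows "cyl_prob \<mu> C' E F \<le> cyl_prob \<mu> C E F"
proof -
  have "cyl_event C' E F \<inter> space \<mu> \<subseteq> cyl_event C E F \<inter> space \<mu>"
    using assms(6) unfolding cyl_event_def by auto
  moreover have "cyl_event C E F \<inter> space \<mu> \<in> sets \<mu>"
    using sets_cyl_event[OF assms(1-5)] sets_\<mu> sets_eq_imp_space_eq[OF sets_\<mu>] by simp
  ultimately show ?thesis
    unfolding cyl_prob_def using prob_space.finite_measure[OF prob_\<mu>]
    by (intro finite_measure.finite_measure_mono) auto
qed

lemma cyl_prob_explore:
  assumes "finite C" "finite E" "finite F" "E \<subseteq> edges" "F \<subseteq> edges"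
    and "finite D" "D \<subseteq> edges" "D \<inter> (E \<union> F) = {}"
  shows "cyl_prob \<mu> C E F = (\<Sum>E'\<in>Pow D. cyl_prob \<mu> C (E \<union> E') (F \<union> (D - E')))"
proof -
  have "integrable \<mu> (\<lambda>c. cyl_indicator c C (E \<union> E') (F \<union> (D - E')))" if "E' \<in> Pow D" for E'
    using assms that by (intro integrable_cyl_indicator) (auto intro: finite_subset)
  hence "(\<integral>c. (\<Sum>E'\<in>Pow D. 1 * cyl_indicator c C (E \<union> E') (F \<union> (D - E'))) \<partial>\<mu>) =
      (\<Sum>E'\<in>Pow D. 1 * cyl_prob \<mu> C (E \<union> E') (F \<union> (D - E')))"
    by (intro integral_sum_mult(2)) (simp_all add: integral_cyl_indicator)
  thus ?thesis
    using cyl_indicator_explore[OF assms(6,8)] integral_cyl_indicator[of C E F] by simp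
qed

lemma integral_move_gain:
  assumes "finite C" "\<And>y. finite (Z y)" "finite E" "finite F" "E \<subseteq> edges" "F \<subseteq> edges"
  shows "integrable \<mu> (\<lambda>c. move_gain (cyl_indicator c) R C E F x Z)"
    and "(\<integral>c. move_gain (cyl_indicator c) R C E F x Z \<partial>\<mu>) = move_gain (cyl_prob \<mu>) R C E F x Z"
proof -
  let ?D = "unexplored R x E F"
  let ?f = "\<lambda>y E' c. cyl_indicator c (Z y) (E \<union> E') (F \<union> (?D - E')) -
    cyl_indicator c C (E \<union> E') (F \<union> (?D - E'))"
  let ?a = "\<lambda>y E'. of_bool (conn (\<lambda>e. e \<in> E \<union> E') (ball1 x R) x y) :: real"
  have int: "integrable \<mu> (\<lambda>c. cyl_indicator c C' (E \<union> E') (F \<union> (?D - E')))"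
    if "finite C'" "E' \<in> Pow ?D" for C' E'
    using assms that finite_unexplored[of R x E F] unexplored_subset_edges[of R x E F]
    by (intro integrable_cyl_indicator) (auto intro: finite_subset)
  have int_f: "integrable \<mu> (?f y E')" "(\<integral>c. ?f y E' c \<partial>\<mu>) =
      cyl_prob \<mu> (Z y) (E \<union> E') (F \<union> (?D - E')) - cyl_prob \<mu> C (E \<union> E') (F \<union> (?D - E'))"
    if "E' \<in> Pow ?D" for y E'
    using int[OF assms(2) that] int[OF assms(1) that] by (simp_all add: integral_cyl_indicator)
  have int_y: "integrable \<mu> (\<lambda>c. \<Sum>E'\<in>Pow ?D. ?a y E' * ?f y E' c)"
    "(\<integral>c. (\<Sum>E'\<in>Pow ?D. ?a y E' * ?f y E' c) \<partial>\<mu>) = (\<Sum>E'\<in>Pow ?D. ?a y E' *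
      (cyl_prob \<mu> (Z y) (E \<union> E') (F \<union> (?D - E')) - cyl_prob \<mu> C (E \<union> E') (F \<union> (?D - E'))))"
    for y
    by (rule integral_sum_mult int_f | assumption)+
  show "integrable \<mu> (\<lambda>c. move_gain (cyl_indicator c) R C E F x Z)"
    unfolding move_gain_def by (rule integral_sum_mult(1) int_y)+
  show "(\<integral>c. move_gain (cyl_indicator c) R C E F x Z \<partial>\<mu>) = move_gain (cyl_prob \<mu>) R C E F x Z"
    unfolding move_gain_def by (rule integral_sum_mult(2) int_y)+
qed

lemma integral_flip_gain:
  assumes "finite C" "finite E" "finite F" "E \<subseteq> edges" "F \<subseteq> edges"
  shows "integrable \<mu> (\<lambda>c. flip_gain (cyl_indicator c) p v C E F)"
    and "(\<integral>c. flip_gain (cyl_indicator c) p v C E F \<partial>\<mu>) = flip_gain (cyl_prob \<mu>) p v C E F"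
proof -
  have int: "integrable \<mu> (\<lambda>c. cyl_indicator c C E' F')"
    if "E' \<subseteq> E" "F' \<subseteq> F" for E' F'
    using assms that by (intro integrable_cyl_indicator) (auto intro: finite_subset)
  let ?f = "\<lambda>e c. (if e \<in> E then p * v * cyl_indicator c C (E - {e}) F
    else (1 - p) * v * cyl_indicator c C E (F - {e})) - v * cyl_indicator c C E F"
  have int_e: "integrable \<mu> (?f e)" "(\<integral>c. ?f e c \<partial>\<mu>) =
      (if e \<in> E then p * v * cyl_prob \<mu> C (E - {e}) F else (1 - p) * v * cyl_prob \<mu> C E (F - {e}))
      - v * cyl_prob \<mu> C E F" for e
    using int[of "E - {e}" F] int[of E "F - {e}"] int[of E F]
    by (cases "e \<in> E"; simp add: integral_cyl_indicator)+
  show "integrable \<mu> (\<lambda>c. flip_gain (cyl_indicator c) p v C E F)"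
    unfolding flip_gain_def by (rule Bochner_Integration.integrable_sum) (rule int_e(1))
  show "(\<integral>c. flip_gain (cyl_indicator c) p v C E F \<partial>\<mu>) = flip_gain (cyl_prob \<mu>) p v C E F"
    unfolding flip_gain_def
    by (subst Bochner_Integration.integral_sum) (simp_all add: int_e)
qed

lemma integral_voter_gen_cyl_indicator:
  fixes C :: "(int ^ 'd) set"
  assumes "finite C" "finite E" "finite F" "E \<subseteq> edges" "F \<subseteq> edges" "E \<inter> F = {}"
  shows "(\<integral>c. voter_gen R v p TYPE('d) C (E \<union> F) (\<lambda>c. cyl_indicator c C E F) c \<partial>\<mu>) =
    (\<Sum>x\<in>C. move_gain (cyl_prob \<mu>) R C E F x (\<lambda>y. insert y (C - {x})))
    + flip_gain (cyl_prob \<mu>) p v C E F"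
proof -
  have moves: "integrable \<mu> (\<lambda>c. move_gain (cyl_indicator c) R C E F x (\<lambda>y. insert y (C - {x})))"
    "(\<integral>c. move_gain (cyl_indicator c) R C E F x (\<lambda>y. insert y (C - {x})) \<partial>\<mu>) =
      move_gain (cyl_prob \<mu>) R C E F x (\<lambda>y. insert y (C - {x}))" for x
    using integral_move_gain[OF assms(1) _ assms(2-5),
        where Z = "\<lambda>y. insert y (C - {x})" and R = R and x = x] assms(1) by auto
  note flips = integral_flip_gain[OF assms(1-5), where p = p and v = v]
  show ?thesis
    unfolding voter_gen_cyl_indicator[OF assms(6)]
    using moves flips assms(1)
    by (simp add: Bochner_Integration.integral_sum Bochner_Integration.integral_add)
qed

lemma move_gain_antimono:
  assumes "finite C" "finite E" "finite F" "E \<subseteq> edges" "F \<subseteq> edges"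
    and "\<And>y. finite (Z y) \<and> Z y \<subseteq> Z' y"
  shows "move_gain (cyl_prob \<mu>) R C E F x Z' \<le> move_gain (cyl_prob \<mu>) R C E F x Z"
proof -
  let ?D = "unexplored R x E F"
  have "cyl_prob \<mu> (Z' y) (E \<union> E') (F \<union> (?D - E')) \<le> cyl_prob \<mu> (Z y) (E \<union> E') (F \<union> (?D - E'))"
    if "E' \<in> Pow ?D" for y E'
    using assms that finite_unexplored[of R x E F] unexplored_subset_edges[of R x E F]
    by (intro cyl_prob_antimono) (auto intro: finite_subset)
  thus ?thesis
    unfolding move_gain_def
    by (intro sum_mono mult_left_mono jrate_nonneg diff_right_mono) auto
qed

lemma move_gain_nonpos:
  assumes "finite C" "finite E" "finite F" "E \<subseteq> edges" "F \<subseteq> edges" "\<And>y. C \<subseteq> Z y"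
  shows "move_gain (cyl_prob \<mu>) R C E F x Z \<le> 0"
proof -
  have "move_gain (cyl_prob \<mu>) R C E F x Z \<le> move_gain (cyl_prob \<mu>) R C E F x (\<lambda>_. C)"
    using assms by (intro move_gain_antimono) auto
  also have "\<dots> = 0" by (simp add: move_gain_def)
  finally show ?thesis .
qed

lemma sum_edge_weight_mubar_state:
  assumes "(xs, E, F) \<in> wk_states" "finite D" "D \<subseteq> edges" "D \<inter> (E \<union> F) = {}"
  shows "(\<Sum>E'\<in>Pow D. edge_weight p E' (D - E') * mubar_state p \<mu> (xs, E, F)) =
    (\<Sum>E'\<in>Pow D. cyl_prob \<mu> (set xs) (E \<union> E') (F \<union> (D - E'))) / edge_weight p E F"
proof -
  have "(\<Sum>E'\<in>Pow D. edge_weight p E' (D - E') * mubar_state p \<mu> (xs, E, F)) =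
      (\<Sum>E'\<in>Pow D. edge_weight p E' (D - E')) * mubar_state p \<mu> (xs, E, F)"
    by (rule sum_distrib_right[symmetric])
  also have "\<dots> = cyl_prob \<mu> (set xs) E F / edge_weight p E F"
    using assms(2) by (simp add: sum_edge_weight_Pow mubar_state_def mubar_eq_cyl_prob)
  also have "cyl_prob \<mu> (set xs) E F = (\<Sum>E'\<in>Pow D. cyl_prob \<mu> (set xs) (E \<union> E') (F \<union> (D - E')))"
    using assms by (intro cyl_prob_explore) (auto simp: wk_states_def)
  finally show ?thesis .
qed

lemma mubar_state_walker_move_change:
  fixes R i :: nat
  assumes "0 < p" "p < 1" "(xs, E, F) \<in> wk_states"
  defines "D \<equiv> unexplored R (xs ! i) E F"
  shows "(\<Sum>E'\<in>Pow D. edge_weight p E' (D - E') *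
      (mubar_state p \<mu> (walker_move R (xs, E, F) i y E') - mubar_state p \<mu> (xs, E, F))) =
    (\<Sum>E'\<in>Pow D. of_bool (conn (\<lambda>e. e \<in> E \<union> E') (ball1 (xs ! i) R) (xs ! i) y) *
      (cyl_prob \<mu> (set (xs[i := y])) (E \<union> E') (F \<union> (D - E')) -
       cyl_prob \<mu> (set xs) (E \<union> E') (F \<union> (D - E')))) / edge_weight p E F"
proof -
  let ?N = "edge_weight p E F"
  let ?xs' = "\<lambda>E'. if conn (\<lambda>e. e \<in> E \<union> E') (ball1 (xs ! i) R) (xs ! i) y then xs[i := y] else xs"
  have D: "finite D" "D \<subseteq> edges" "D \<inter> (E \<union> F) = {}"
    unfolding D_def by (simp_all add: finite_unexplored unexplored_subset_edges unexplored_disjoint)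
  have "(\<Sum>E'\<in>Pow D. edge_weight p E' (D - E') *
      (mubar_state p \<mu> (walker_move R (xs, E, F) i y E') - mubar_state p \<mu> (xs, E, F))) =
    (\<Sum>E'\<in>Pow D. cyl_prob \<mu> (set (?xs' E')) (E \<union> E') (F \<union> (D - E')) / ?N) -
    (\<Sum>E'\<in>Pow D. cyl_prob \<mu> (set xs) (E \<union> E') (F \<union> (D - E'))) / ?N"
    using edge_weight_mubar_state_walker_move[OF assms(1-3), where \<mu> = \<mu> and R = R and i = i
        and y = y]
      sum_edge_weight_mubar_state[OF assms(3) D, of p]
    by (simp add: right_diff_distrib sum_subtractf D_def del: walker_move.simps)
  also have "\<dots> = (\<Sum>E'\<in>Pow D. cyl_prob \<mu> (set (?xs' E')) (E \<union> E') (F \<union> (D - E')) -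
      cyl_prob \<mu> (set xs) (E \<union> E') (F \<union> (D - E'))) / ?N"
    by (simp add: sum_subtractf diff_divide_distrib sum_divide_distrib)
  also have "\<dots> = (\<Sum>E'\<in>Pow D. of_bool (conn (\<lambda>e. e \<in> E \<union> E') (ball1 (xs ! i) R) (xs ! i) y) *
      (cyl_prob \<mu> (set (xs[i := y])) (E \<union> E') (F \<union> (D - E')) -
       cyl_prob \<mu> (set xs) (E \<union> E') (F \<union> (D - E')))) / ?N"
    by (intro arg_cong[where f = "\<lambda>t. t / ?N"] sum.cong refl) simp
  finally show ?thesis .
qed

lemma wk_generator_mubar:
  assumes "0 < p" "p < 1" "(xs, E, F) \<in> wk_states"
  shows "(\<Sum>\<sigma>\<in>jump_supp (wk_rate R v p) (xs, E, F).
      wk_rate R v p (xs, E, F) \<sigma> * (mubar_state p \<mu> \<sigma> - mubar_state p \<mu> (xs, E, F))) =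
    ((\<Sum>i<length xs. move_gain (cyl_prob \<mu>) R (set xs) E F (xs ! i) (\<lambda>y. set (xs[i := y])))
      + flip_gain (cyl_prob \<mu>) p v (set xs) E F) / edge_weight p E F"
proof -
  let ?m = "mubar_state p \<mu>" and ?N = "edge_weight p E F"
  have fin: "finite E" "finite F" using assms(3) by (auto simp: wk_states_def)
  have flips: "v * (\<Sum>e\<in>E \<union> F. ?m (forget_edge (xs, E, F) e) - ?m (xs, E, F)) =
      flip_gain (cyl_prob \<mu>) p v (set xs) E F / ?N"
    unfolding flip_gain_def sum_distrib_left sum_divide_distrib
    by (rule sum.cong[OF refl], rule mubar_state_forget_edge[OF assms])
  have walks: "(\<Sum>E'\<in>Pow (unexplored R (xs ! i) E F).
      edge_weight p E' (unexplored R (xs ! i) E F - E') * jrate TYPE('d) R *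
      (?m (walker_move R (xs, E, F) i y E') - ?m (xs, E, F))) =
    jrate TYPE('d) R * (\<Sum>E'\<in>Pow (unexplored R (xs ! i) E F).
      of_bool (conn (\<lambda>e. e \<in> E \<union> E') (ball1 (xs ! i) R) (xs ! i) y) *
      (cyl_prob \<mu> (set (xs[i := y])) (E \<union> E') (F \<union> (unexplored R (xs ! i) E F - E')) -
       cyl_prob \<mu> (set xs) (E \<union> E') (F \<union> (unexplored R (xs ! i) E F - E')))) / ?N" for i y
  proof -
    have "(\<Sum>E'\<in>Pow (unexplored R (xs ! i) E F).
        edge_weight p E' (unexplored R (xs ! i) E F - E') * jrate TYPE('d) R *
        (?m (walker_move R (xs, E, F) i y E') - ?m (xs, E, F))) =
      jrate TYPE('d) R * (\<Sum>E'\<in>Pow (unexplored R (xs ! i) E F).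
        edge_weight p E' (unexplored R (xs ! i) E F - E') *
        (?m (walker_move R (xs, E, F) i y E') - ?m (xs, E, F)))"
      by (simp add: sum_distrib_left mult_ac del: walker_move.simps)
    thus ?thesis
      by (simp only: mubar_state_walker_move_change[OF assms] times_divide_eq_right)
  qed
  show ?thesis
    unfolding wk_generator[OF fin] flips walks move_gain_def sum_divide_distrib add_divide_distrib
    by (rule add.commute)
qed

end

section \<open>Superharmonicity of mubar and convergence\<close>

lemma set_take_nth: "k < l \<Longrightarrow> l \<le> length xs \<Longrightarrow> xs ! k \<in> set (take l xs)"
  by (auto simp: in_set_conv_nth intro!: exI[of _ k])

lemma bij_betw_nth_first_occurrences:
  "bij_betw (nth xs) {i. i < length xs \<and> xs ! i \<notin> set (take i xs)} (set xs)"
proof (rule bij_betwI')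
  fix i j assume i: "i \<in> {i. i < length xs \<and> xs ! i \<notin> set (take i xs)}"
    and j: "j \<in> {i. i < length xs \<and> xs ! i \<notin> set (take i xs)}"
  show "(xs ! i = xs ! j) = (i = j)"
  proof
    assume eq: "xs ! i = xs ! j"
    show "i = j"
    proof (rule ccontr)
      assume "i \<noteq> j"
      then consider "i < j" | "j < i" by linarith
      thus False
        using i j eq set_take_nth[of i j xs] set_take_nth[of j i xs] by cases auto
    qed
  qed simp
next
  fix x assume x: "x \<in> set xs"
  define i where "i = (LEAST i. i < length xs \<and> xs ! i = x)"
  have i: "i < length xs \<and> xs ! i = x"
    unfolding i_def by (rule LeastI_ex) (use x in \<open>auto simp: in_set_conv_nth\<close>)
  moreover have "xs ! i \<notin> set (take i xs)"
  proof
    assume "xs ! i \<in> set (take i xs)"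
    then obtain k where "k < i" "xs ! k = x" using i by (auto simp: in_set_conv_nth)
    thus False using i not_less_Least[of k "\<lambda>i. i < length xs \<and> xs ! i = x"] unfolding i_def by auto
  qed
  ultimately show "\<exists>i\<in>{i. i < length xs \<and> xs ! i \<notin> set (take i xs)}. x = xs ! i" by auto
qed auto

lemma set_update_superset: "i < length xs \<Longrightarrow> insert y (set xs - {xs ! i}) \<subseteq> set (xs[i := y])"
  by (auto simp: in_set_conv_nth nth_list_update) (metis nth_list_update_neq)

lemma set_update_superset_repeated:
  assumes "i < length xs" "xs ! i \<in> set (take i xs)"
  shows "set xs \<subseteq> set (xs[i := y])"
proof
  fix z assume z: "z \<in> set xs"
  show "z \<in> set (xs[i := y])"
  proof (cases "z = xs ! i")
    case True
    then obtain j where "j < i" "xs ! j = z" using assms(2) by (auto simp: in_set_conv_nth)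
    thus ?thesis using assms(1) by (metis nth_list_update_neq nat_neq_iff length_list_update
        nth_mem order.strict_trans)
  next
    case False
    thus ?thesis using set_update_superset[OF assms(1), of y] z by auto
  qed
qed

lemma sum_update_le_sum_set:
  fixes H :: "'a \<Rightarrow> ('a \<Rightarrow> 'a set) \<Rightarrow> 'b::ordered_comm_monoid_add"
  assumes antimono: "\<And>x Z Z'. (\<And>y. finite (Z y) \<and> Z y \<subseteq> Z' y) \<Longrightarrow> H x Z' \<le> H x Z"
    and nonpos: "\<And>x Z. (\<And>y. set xs \<subseteq> Z y) \<Longrightarrow> H x Z \<le> 0"
  shows "(\<Sum>i<length xs. H (xs ! i) (\<lambda>y. set (xs[i := y]))) \<le>
    (\<Sum>x\<in>set xs. H x (\<lambda>y. insert y (set xs - {x})))"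
proof -
  define I where "I = {i. i < length xs \<and> xs ! i \<notin> set (take i xs)}"
  have "I \<subseteq> {..<length xs}" unfolding I_def by auto
  hence "(\<Sum>i<length xs. H (xs ! i) (\<lambda>y. set (xs[i := y]))) =
      (\<Sum>i\<in>I. H (xs ! i) (\<lambda>y. set (xs[i := y]))) +
      (\<Sum>i\<in>{..<length xs} - I. H (xs ! i) (\<lambda>y. set (xs[i := y])))"
    by (simp add: sum.subset_diff add.commute)
  also have "\<dots> \<le> (\<Sum>i\<in>I. H (xs ! i) (\<lambda>y. insert y (set xs - {xs ! i}))) + 0"
  proof (rule add_mono)
    show "(\<Sum>i\<in>I. H (xs ! i) (\<lambda>y. set (xs[i := y]))) \<le>
        (\<Sum>i\<in>I. H (xs ! i) (\<lambda>y. insert y (set xs - {xs ! i})))"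
      by (intro sum_mono antimono conjI finite_insert finite_Diff finite_set set_update_superset)
         (auto simp: I_def)
    show "(\<Sum>i\<in>{..<length xs} - I. H (xs ! i) (\<lambda>y. set (xs[i := y]))) \<le> 0"
      by (intro sum_nonpos nonpos set_update_superset_repeated) (auto simp: I_def)
  qed
  also have "\<dots> = (\<Sum>x\<in>set xs. H x (\<lambda>y. insert y (set xs - {x})))"
    using sum.reindex_bij_betw[OF bij_betw_nth_first_occurrences] by (simp add: I_def)
  finally show ?thesis .
qed

lemma stationary_gain_balance:
  fixes C :: "(int ^ 'd::finite) set"
  assumes "voter_stationary R v p \<mu>"
    and "finite C" "finite E" "finite F" "E \<subseteq> edges" "F \<subseteq> edges" "E \<inter> F = {}"
  shows "(\<Sum>x\<in>C. move_gain (cyl_prob \<mu>) R C E F x (\<lambda>y. insert y (C - {x})))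
    + flip_gain (cyl_prob \<mu>) p v C E F = 0"
proof -
  have \<mu>: "prob_space \<mu>" "sets \<mu> = sets cfg_space"
    using assms(1) by (simp_all add: voter_stationary_def)
  have "cylinder C (E \<union> F) (\<lambda>c. cyl_indicator c C E F)"
    unfolding cylinder_def cyl_indicator_def cyl_event_def indicator_def by auto
  hence "(\<integral>c. voter_gen R v p TYPE('d) C (E \<union> F) (\<lambda>c. cyl_indicator c C E F) c \<partial>\<mu>) = 0"
    using assms unfolding voter_stationary_def by blast
  thus ?thesis using integral_voter_gen_cyl_indicator[OF \<mu> assms(2-7)] by simp
qed

theorem mubar_state_superharmonic:
  fixes \<mu> :: "((int ^ 'd::finite \<Rightarrow> bool) \<times> ((int ^ 'd) set \<Rightarrow> bool)) measure"
  assumes "voter_stationary R v p \<mu>" "0 < p" "p < 1"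
  shows "jump_superharmonic (wk_rate R v p) wk_states (mubar_state p \<mu>)"
  unfolding jump_superharmonic_def
proof
  fix s :: "'d wstate" assume s_state: "s \<in> wk_states"
  obtain xs E F where s: "s = (xs, E, F)" by (cases s)
  with s_state have fin: "finite E" "finite F" "E \<subseteq> edges" "F \<subseteq> edges" "E \<inter> F = {}"
    by (auto simp: wk_states_def)
  have \<mu>: "prob_space \<mu>" "sets \<mu> = sets cfg_space"
    using assms(1) by (simp_all add: voter_stationary_def)
  let ?H = "move_gain (cyl_prob \<mu>) R (set xs) E F"
    and ?G = "flip_gain (cyl_prob \<mu>) p v (set xs) E F"
  have "(\<Sum>i<length xs. ?H (xs ! i) (\<lambda>y. set (xs[i := y]))) \<le>
      (\<Sum>x\<in>set xs. ?H x (\<lambda>y. insert y (set xs - {x})))"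
    using fin by (intro sum_update_le_sum_set move_gain_antimono[OF \<mu>] move_gain_nonpos[OF \<mu>]) auto
  moreover have "(\<Sum>x\<in>set xs. ?H x (\<lambda>y. insert y (set xs - {x}))) + ?G = 0"
    using stationary_gain_balance[OF assms(1)] fin by simp
  ultimately have "(\<Sum>i<length xs. ?H (xs ! i) (\<lambda>y. set (xs[i := y]))) + ?G \<le> 0"
    by simp
  thus "(\<Sum>s'\<in>jump_supp (wk_rate R v p) s.
      wk_rate R v p s s' * (mubar_state p \<mu> s' - mubar_state p \<mu> s)) \<le> 0"
    unfolding s wk_generator_mubar[OF \<mu> assms(2,3) s_state[unfolded s]]
    using edge_weight_pos[OF assms(2,3), of E F] by (simp add: divide_nonpos_pos)
qed

theorem lemma4p12:
  fixes \<mu> :: "((int ^ 'd::finite \<Rightarrow> bool) \<times> ((int ^ 'd) set \<Rightarrow> bool)) measure"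
    and R k :: nat and p v :: real and xs :: "(int ^ 'd) list"
    and E F :: "(int ^ 'd) set set"
  assumes "CARD('d) \<ge> 3"
    and "0 < p" and "p < 1" and "0 < v"
    and "voter_stationary R v p \<mu>"
    and "length xs = k" and "distinct xs"
    and "finite E" and "finite F" and "E \<subseteq> edges" and "F \<subseteq> edges" and "E \<inter> F = {}"
  shows "\<exists>L. ((\<lambda>t. wk_expect R v p \<mu> t (xs, E, F)) \<longlongrightarrow> L) at_top"
proof -
  interpret superharmonic_jump_chain "wk_rate R v p" "wk_states :: 'd wstate set" "mubar_state p \<mu>"
    using assms(2-5)
    by (intro superharmonic_jump_chain.intro superharmonic_jump_chain_axioms.intro wk_jump_chain
        mubar_state_nonneg mubar_state_superharmonic) auto
  have "(xs, E, F) \<in> wk_states" using assms(8-12) by (simp add: wk_states_def)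
  from expect_tendsto[OF this] show ?thesis unfolding wk_expect_eq_jump_expect by blast
qed

end
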